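(* Let $\mathbf{K}$ be an algebraically closed field of arbitrary characteristic, complete with respect to a non-archimedean absolute value. Let $L$ be a line and $C$ be a nonsingular curve of degree $d\geq 3$ in $\mathbb{P}^2(\mathbf{K})$. If $L$ and $C$ intersect transversally and $L$ does not pass through any point of multiplicity $d$ of $C$, then the complement $\mathbb{P}^2(\mathbf{K})\setminus(C\cup L)$ is Brody $\mathbf{K}$-hyperbolic.
   Context: A point of multiplicity $d$ of the degree-$d$ curve $C$ means a point $P\in C$ at which the tangent line of $C$ meets $C$ with intersection multiplicity $d$. A variety $X$ over $\mathbf{K}$ is Brody $\mathbf{K}$-hyperbolic if every analytic map $f\colon\mathbf{K}\to X$ (given by entire functions on $\mathbf{K}$) is constant. *)

theory Defs
  imports "HOL-Computational_Algebra.Polynomial"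
begin

definition nonarch_abs :: "('a::field \<Rightarrow> real) \<Rightarrow> bool" where
  "nonarch_abs v \<longleftrightarrow>
     (\<forall>x. 0 \<le> v x) \<and> (\<forall>x. v x = 0 \<longleftrightarrow> x = 0) \<and>
     (\<forall>x y. v (x * y) = v x * v y) \<and>
     (\<forall>x y. v (x + y) \<le> max (v x) (v y)) \<and>
     (\<exists>x. v x \<noteq> 0 \<and> v x \<noteq> 1)"

definition v_cauchy :: "('a::field \<Rightarrow> real) \<Rightarrow> (nat \<Rightarrow> 'a) \<Rightarrow> bool" where
  "v_cauchy v s \<longleftrightarrow> (\<forall>e>0. \<exists>N. \<forall>m\<ge>N. \<forall>n\<ge>N. v (s m - s n) < e)"

definition v_tendsto :: "('a::field \<Rightarrow> real) \<Rightarrow> (nat \<Rightarrow> 'a) \<Rightarrow> 'a \<Rightarrow> bool" where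
  "v_tendsto v s l \<longleftrightarrow> ((\<lambda>n. v (s n - l)) \<longlonglongrightarrow> 0)"

definition v_complete :: "('a::field \<Rightarrow> real) \<Rightarrow> bool" where
  "v_complete v \<longleftrightarrow> (\<forall>s. v_cauchy v s \<longrightarrow> (\<exists>l. v_tendsto v s l))"

definition alg_closed_field :: "'a::field itself \<Rightarrow> bool" where
  "alg_closed_field _ \<longleftrightarrow> (\<forall>p::'a poly. 1 \<le> degree p \<longrightarrow> (\<exists>x. poly p x = 0))"

definition entire :: "('a::field \<Rightarrow> real) \<Rightarrow> ('a \<Rightarrow> 'a) \<Rightarrow> bool" where
  "entire v f \<longleftrightarrow> (\<exists>a :: nat \<Rightarrow> 'a. \<forall>z.
      v_tendsto v (\<lambda>n. \<Sum>k<n. a k * z ^ k) (f z))"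

type_synonym 'a pt = "'a \<times> 'a \<times> 'a"

definition pscale :: "'a::field \<Rightarrow> 'a pt \<Rightarrow> 'a pt" where
  "pscale c p = (c * fst p, c * fst (snd p), c * snd (snd p))"

definition padd :: "'a::field pt \<Rightarrow> 'a pt \<Rightarrow> 'a pt" where
  "padd p q = (fst p + fst q, fst (snd p) + fst (snd q), snd (snd p) + snd (snd q))"

definition pdot :: "'a::field pt \<Rightarrow> 'a pt \<Rightarrow> 'a" where
  "pdot p q = fst p * fst q + fst (snd p) * fst (snd q) + snd (snd p) * snd (snd q)"

definition proportional :: "'a::field pt \<Rightarrow> 'a pt \<Rightarrow> bool" where
  "proportional p q \<longleftrightarrow> (\<exists>c. c \<noteq> 0 \<and> q = pscale c p)"

text \<open>A form of degree d is given by coefficients c i j of the monomial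
  x0^i x1^j x2^(d-i-j), for i + j \<le> d (other values of c are irrelevant).\<close>

definition hp_eval :: "nat \<Rightarrow> (nat \<Rightarrow> nat \<Rightarrow> 'a::field) \<Rightarrow> 'a pt \<Rightarrow> 'a" where
  "hp_eval d c p = (case p of (x0, x1, x2) \<Rightarrow>
     (\<Sum>i\<le>d. \<Sum>j\<le>d-i. c i j * x0 ^ i * x1 ^ j * x2 ^ (d-i-j)))"

definition hp_d0 :: "nat \<Rightarrow> (nat \<Rightarrow> nat \<Rightarrow> 'a::field) \<Rightarrow> 'a pt \<Rightarrow> 'a" where
  "hp_d0 d c p = (case p of (x0, x1, x2) \<Rightarrow>
     (\<Sum>i\<le>d. \<Sum>j\<le>d-i. c i j * of_nat i * x0 ^ (i-1) * x1 ^ j * x2 ^ (d-i-j)))"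

definition hp_d1 :: "nat \<Rightarrow> (nat \<Rightarrow> nat \<Rightarrow> 'a::field) \<Rightarrow> 'a pt \<Rightarrow> 'a" where
  "hp_d1 d c p = (case p of (x0, x1, x2) \<Rightarrow>
     (\<Sum>i\<le>d. \<Sum>j\<le>d-i. c i j * x0 ^ i * of_nat j * x1 ^ (j-1) * x2 ^ (d-i-j)))"

definition hp_d2 :: "nat \<Rightarrow> (nat \<Rightarrow> nat \<Rightarrow> 'a::field) \<Rightarrow> 'a pt \<Rightarrow> 'a" where
  "hp_d2 d c p = (case p of (x0, x1, x2) \<Rightarrow>
     (\<Sum>i\<le>d. \<Sum>j\<le>d-i. c i j * x0 ^ i * x1 ^ j * of_nat (d-i-j) * x2 ^ (d-i-j-1)))"

definition hp_grad :: "nat \<Rightarrow> (nat \<Rightarrow> nat \<Rightarrow> 'a::field) \<Rightarrow> 'a pt \<Rightarrow> 'a pt" where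
  "hp_grad d c p = (hp_d0 d c p, hp_d1 d c p, hp_d2 d c p)"

definition nonsingular_curve :: "nat \<Rightarrow> (nat \<Rightarrow> nat \<Rightarrow> 'a::field) \<Rightarrow> bool" where
  "nonsingular_curve d c \<longleftrightarrow>
     (\<forall>p. p \<noteq> (0,0,0) \<longrightarrow> hp_eval d c p = 0 \<longrightarrow> hp_grad d c p \<noteq> (0,0,0))"

text \<open>Line L = {a . x = 0} (a \<noteq> 0) meets C transversally: at every common point
  the tangent line of C (with equation grad F(P) . x = 0) differs from L.\<close>
definition transversal :: "nat \<Rightarrow> (nat \<Rightarrow> nat \<Rightarrow> 'a::field) \<Rightarrow> 'a pt \<Rightarrow> bool" where
  "transversal d c a \<longleftrightarrow>
     (\<forall>p. p \<noteq> (0,0,0) \<longrightarrow> hp_eval d c p = 0 \<longrightarrow> pdot a p = 0 \<longrightarrow>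
        \<not> proportional a (hp_grad d c p))"

text \<open>P is a point of multiplicity d of C: the tangent line T_P meets C at P
  with intersection multiplicity d, i.e. for a point Q of T_P off C, the
  restriction of F to T_P, (x,y) \<mapsto> F(xP + yQ), equals F(Q) y^d with F(Q) \<noteq> 0.\<close>
definition mult_d_point :: "nat \<Rightarrow> (nat \<Rightarrow> nat \<Rightarrow> 'a::field) \<Rightarrow> 'a pt \<Rightarrow> bool" where
  "mult_d_point d c p \<longleftrightarrow> p \<noteq> (0,0,0) \<and> hp_eval d c p = 0 \<and>
     (\<exists>q. pdot (hp_grad d c p) q = 0 \<and> hp_eval d c q \<noteq> 0 \<and>
        (\<forall>x y. hp_eval d c (padd (pscale x p) (pscale y q)) = y ^ d * hp_eval d c q))"

text \<open>Brody K-hyperbolicity of the complement P^2 \ (C \<union> L): every analytic map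
  K \<rightarrow> P^2, given by entire functions f0, f1, f2 without common zeros, with image
  in the complement, is constant.\<close>
definition brody_hyperbolic_complement ::
    "('a::field \<Rightarrow> real) \<Rightarrow> nat \<Rightarrow> (nat \<Rightarrow> nat \<Rightarrow> 'a) \<Rightarrow> 'a pt \<Rightarrow> bool" where
  "brody_hyperbolic_complement v d c a \<longleftrightarrow>
     (\<forall>f0 f1 f2. entire v f0 \<longrightarrow> entire v f1 \<longrightarrow> entire v f2 \<longrightarrow>
        (\<forall>z. (f0 z, f1 z, f2 z) \<noteq> (0,0,0)) \<longrightarrow>
        (\<forall>z. hp_eval d c (f0 z, f1 z, f2 z) \<noteq> 0 \<and> pdot a (f0 z, f1 z, f2 z) \<noteq> 0) \<longrightarrow>
        (\<forall>z w. proportional (f0 z, f1 z, f2 z) (f0 w, f1 w, f2 w)))"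

end

theory Submission
  imports Defs
begin

(* Over a complete algebraically closed non-archimedean field, an entire function without zeros is
   constant: otherwise roots of its successive truncations, each chosen nearest to the previous one,
   converge to a zero.  For an entire map f into the complement of C and L, the linear form of L and
   the form F of C are therefore constant along f.  In a frame (u, w, e) adapted to L write
   f = sigma u + tau w + const; by transversality F splits on L into d distinct linear factors
   tau - x sigma.  Since F(f) is constant, the top-degree part of F(sigma u + tau w) cancels, so
   the Gauss norm of the product of these factors grows only like the (d - 1)-st power of the Gauss
   norms of sigma and tau, while any two factors bound sigma and tau; hence one factor is constant.
   Then f runs in a line through a point P of C on L on which F is a nonzero constant.  As P is
   not a point of multiplicity d, F is not constant along that line, so sigma satisfies a
   nontrivial polynomial equation and is constant as well. *)

lemma alg_closed_poly_splits:
  fixes p :: "'a::field poly"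
  assumes acl: "alg_closed_field TYPE('a)" and "p \<noteq> 0"
  shows "\<exists>xs. length xs = degree p \<and> p = smult (lead_coeff p) (\<Prod>x\<leftarrow>xs. [:-x, 1:])"
  using assms(2)
proof (induction "degree p" arbitrary: p rule: less_induct)
  case (less p)
  show ?case
  proof (cases "degree p = 0")
    case True
    thus ?thesis
      by (intro exI[of _ "[]"]) (auto elim!: degree_eq_zeroE)
  next
    case False
    then obtain x where "poly p x = 0"
      using acl unfolding alg_closed_field_def by (metis One_nat_def Suc_leI neq0_conv)
    hence "[:-x, 1:] dvd p"
      using poly_eq_0_iff_dvd by blast
    then obtain q where p_eq: "p = [:-x, 1:] * q"
      by (elim dvdE)
    have "q \<noteq> 0"
      using less.prems p_eq by auto
    moreover from this have deg: "degree p = Suc (degree q)"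
      unfolding p_eq by (subst degree_mult_eq) auto
    ultimately obtain xs where xs: "length xs = degree q" "q = smult (lead_coeff q) (\<Prod>x\<leftarrow>xs. [:-x, 1:])"
      using less.hyps[of q] by auto
    have "smult (lead_coeff p) (\<Prod>y\<leftarrow>x # xs. [:- y, 1:]) =
          [:- x, 1:] * smult (lead_coeff q) (\<Prod>y\<leftarrow>xs. [:- y, 1:])"
      unfolding p_eq lead_coeff_mult by simp
    also note xs(2) [symmetric]
    also note p_eq [symmetric]
    finally show ?thesis using xs(1)
      by (intro exI[of _ "x # xs"]) (auto simp: deg)
  qed
qed

lemma poly_prod_linear: "poly (\<Prod>x\<leftarrow>xs. [:-x, 1:]) w = (\<Prod>x\<leftarrow>xs. w - x :: 'a::comm_ring_1)"
  by (induction xs) (auto simp: algebra_simps)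

lemma poly_prod_linear_0: "poly (\<Prod>x\<leftarrow>xs. [:-x, 1:]) 0 = (\<Prod>x\<leftarrow>xs. - x :: 'a::comm_ring_1)"
  by (induction xs) (auto simp: algebra_simps)

lemma poly_prod_linear_root:
  fixes xs :: "'a::idom list"
  assumes "p = smult c (\<Prod>x\<leftarrow>xs. [:-x, 1:])" "y \<in> set xs"
  shows "poly p y = 0"
  using assms by (simp only: poly_smult poly_prod_linear) (auto simp: prod_list_zero_iff)

lemma alg_closed_field_infinite:
  assumes "alg_closed_field TYPE('a::field)"
  shows "infinite (UNIV :: 'a set)"
proof
  assume fin: "finite (UNIV :: 'a set)"
  define p :: "'a poly" where "p = (\<Prod>x\<in>UNIV. [:-x, 1:]) + 1"
  have "degree (\<Prod>x\<in>UNIV. [:-x, 1:] :: 'a poly) = card (UNIV :: 'a set)"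
    by (subst degree_prod_eq_sum_degree) auto
  hence "degree p = card (UNIV :: 'a set)"
    unfolding p_def using fin by (subst degree_add_eq_left) (auto simp: finite_UNIV_card_ge_0)
  hence "1 \<le> degree p" using fin by (simp add: finite_UNIV_card_ge_0 Suc_le_eq)
  then obtain y where "poly p y = 0" using assms unfolding alg_closed_field_def by blast
  moreover have "poly p y = 1" unfolding p_def poly_add poly_prod using fin by simp
  ultimately show False by simp
qed

lemma poly_eqI_infinite:
  fixes p q :: "'a::idom poly"
  assumes "infinite (UNIV :: 'a set)" "\<And>y. poly p y = poly q y"
  shows "p = q"
proof (rule ccontr)
  assume "p \<noteq> q"
  hence "finite {x. poly (p - q) x = 0}" by (intro poly_roots_finite) simp
  moreover have "{x. poly (p - q) x = 0} = UNIV" using assms(2) by auto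
  ultimately show False using assms(1) by simp
qed

section \<open>Non-archimedean absolute values\<close>

lemma mult_div_add_one_less: "0 < (e::real) \<Longrightarrow> 0 \<le> B \<Longrightarrow> B * (e / (B + 1)) < e"
  by (simp add: field_simps)

lemma div_add_one_mult_less: "0 < (e::real) \<Longrightarrow> 0 \<le> B \<Longrightarrow> (e / (B + 1)) * B < e"
  by (simp add: field_simps)

lemma mult_less_of_less_le: "0 \<le> x \<Longrightarrow> x < A \<Longrightarrow> 0 \<le> y \<Longrightarrow> y \<le> B \<Longrightarrow> 0 < B \<Longrightarrow> x * y < A * (B::real)"
  by (metis le_less_trans mult_left_mono mult_strict_right_mono)

lemma mult_less_of_le_less: "0 \<le> x \<Longrightarrow> x \<le> A \<Longrightarrow> 0 \<le> y \<Longrightarrow> y < B \<Longrightarrow> 0 < A \<Longrightarrow> x * y < A * (B::real)"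
  using mult_less_of_less_le[of y B x A] by (simp add: mult.commute)

lemma exists_power_gt:
  assumes "0 < (c::real)" "1 \<le> k"
  shows "\<exists>r\<ge>1. B < c * r ^ k"
proof -
  define r where "r = max 1 (B / c + 1)"
  have "B < c * (B / c + 1)" using assms(1) by (simp add: field_simps)
  also have "\<dots> \<le> c * r" using assms(1) unfolding r_def by (intro mult_left_mono) auto
  also have "r ^ 1 \<le> r ^ k" using assms(2) unfolding r_def by (intro power_increasing) auto
  hence "c * r \<le> c * r ^ k" using assms(1) by simp
  finally have "B < c * r ^ k" .
  moreover have "r \<ge> 1" unfolding r_def by simp
  ultimately show ?thesis by blast
qed

lemma prod_list_mono_nonneg:
  assumes "\<forall>x\<in>set xs. 0 \<le> f x \<and> f x \<le> (g x :: real)"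
  shows "(\<Prod>x\<leftarrow>xs. f x) \<le> (\<Prod>x\<leftarrow>xs. g x)"
  using assms
proof (induction xs)
  case (Cons x xs)
  thus ?case by (auto intro!: mult_mono prod_list_nonneg order_trans[of 0 "f _" "g _"])
qed simp

lemma prod_list_scale: "(\<Prod>x\<leftarrow>xs. s * g x) = s ^ length xs * (\<Prod>x\<leftarrow>xs. g x :: 'a::comm_ring_1)"
  by (induction xs) (auto simp: algebra_simps)

lemma prod_list_const: "(\<Prod>x\<leftarrow>xs. s) = s ^ length xs"
  by (induction xs) auto

locale nonarch_field =
  fixes v :: "'a::field \<Rightarrow> real"
  assumes nonarch: "nonarch_abs v"
begin

lemma v_nonneg[simp]: "0 \<le> v x" using nonarch unfolding nonarch_abs_def by blast

lemma v_zero_iff[simp]: "v x = 0 \<longleftrightarrow> x = 0" using nonarch unfolding nonarch_abs_def by blast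

lemma v_mult: "v (x * y) = v x * v y" using nonarch unfolding nonarch_abs_def by blast

lemma v_add: "v (x + y) \<le> max (v x) (v y)" using nonarch unfolding nonarch_abs_def by blast

lemma v_0[simp]: "v 0 = 0" by simp

lemma v_pos[simp]: "0 < v x \<longleftrightarrow> x \<noteq> 0" using v_nonneg[of x] v_zero_iff[of x] by linarith

lemma v_1[simp]: "v 1 = 1"
proof -
  have "v 1 = v 1 * v 1" using v_mult[of 1 1] by simp
  moreover have "v 1 \<noteq> 0" by simp
  ultimately show ?thesis by (metis mult_cancel_left1)
qed

lemma v_minus1: "v (-1) = 1"
proof -
  have "v (-1) * v (-1) = 1" using v_mult[of "-1" "-1"] by simp
  moreover have "v (-1) \<ge> 0" by simp
  ultimately show ?thesis by (metis abs_of_nonneg abs_square_eq_1 power2_eq_square)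
qed

lemma v_uminus[simp]: "v (- x) = v x"
  using v_mult[of "-1" x] v_minus1 by simp

lemma v_minus_commute: "v (x - y) = v (y - x)"
  by (metis minus_diff_eq v_uminus)

lemma v_diff: "v (x - y) \<le> max (v x) (v y)"
  using v_add[of x "-y"] by simp

lemma v_power: "v (x ^ n) = v x ^ n"
  by (induction n) (auto simp: v_mult)

lemma v_inverse: "x \<noteq> 0 \<Longrightarrow> v (inverse x) = inverse (v x)"
  using v_mult[of x "inverse x"] by (simp add: field_simps)

lemma v_add_le: "v x \<le> B \<Longrightarrow> v y \<le> B \<Longrightarrow> v (x + y) \<le> B"
  using v_add[of x y] by linarith

lemma v_add_lt: "v x < B \<Longrightarrow> v y < B \<Longrightarrow> v (x + y) < B"
  using v_add[of x y] by linarith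

lemma v_add_dominant: assumes "v y < v x" shows "v (x + y) = v x"
proof -
  have "v x \<le> max (v (x + y)) (v y)" using v_diff[of "x+y" y] by simp
  hence "v x \<le> v (x + y)" using assms by linarith
  moreover have "v (x + y) \<le> v x" using v_add[of x y] assms by linarith
  ultimately show ?thesis by linarith
qed

lemma v_diff_dominant: assumes "v y < v x" shows "v (x - y) = v x"
  using v_add_dominant[of "-y" x] assms by simp

lemma v_sum_le: "(\<And>i. i \<in> S \<Longrightarrow> v (g i) \<le> B) \<Longrightarrow> 0 \<le> B \<Longrightarrow> v (sum g S) \<le> B"
proof (induction S rule: infinite_finite_induct)
  case (insert x F) then show ?case by (auto intro!: v_add_le)
qed auto

lemma v_sum_lt: "finite S \<Longrightarrow> (\<And>i. i \<in> S \<Longrightarrow> v (g i) < B) \<Longrightarrow> 0 < B \<Longrightarrow> v (sum g S) < B"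
proof (induction S rule: finite_induct)
  case (insert x F) then show ?case by (auto intro!: v_add_lt)
qed auto

lemma exists_v_gt_1: "\<exists>x. v x > 1"
proof -
  obtain x where x: "v x \<noteq> 0" "v x \<noteq> 1" using nonarch unfolding nonarch_abs_def by blast
  show ?thesis
  proof (cases "v x > 1")
    case False
    hence "v x < 1" using x by simp
    hence "v (inverse x) > 1" using x by (simp add: v_inverse one_less_inverse)
    then show ?thesis by blast
  qed blast
qed

lemma exists_v_ge: "\<exists>z. v z \<ge> R"
proof -
  obtain x where x: "v x > 1" using exists_v_gt_1 by blast
  obtain n where "R < v x ^ n" using real_arch_pow[OF x] by blast
  thus ?thesis by (metis less_le v_power)
qed

lemma exists_nonzero_v_less: "0 < e \<Longrightarrow> \<exists>z. z \<noteq> 0 \<and> v z < e"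
proof -
  assume e: "0 < e"
  obtain z where z: "v z \<ge> 2 / e" using exists_v_ge by blast
  hence "z \<noteq> 0" using e by (auto simp: field_simps)
  hence "v (inverse z) = inverse (v z)" by (simp add: v_inverse)
  moreover have "inverse (v z) < e"
  proof -
    have "v z > 0" using \<open>z \<noteq> 0\<close> by simp
    have "1 / e < v z" using z e by (smt (verit) divide_less_cancel)
    thus ?thesis using \<open>v z > 0\<close> e by (simp add: field_simps)
  qed
  ultimately show ?thesis using \<open>z \<noteq> 0\<close> by (metis inverse_nonzero_iff_nonzero)
qed

lemma v_tendsto_iff: "v_tendsto v s l \<longleftrightarrow> (\<forall>e>0. \<exists>N. \<forall>n\<ge>N. v (s n - l) < e)"
  unfolding v_tendsto_def lim_sequentially by (simp add: dist_real_def)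

lemma v_tendsto_unique: assumes "v_tendsto v s l1" "v_tendsto v s l2" shows "l1 = l2"
proof (rule ccontr)
  assume ne: "l1 \<noteq> l2"
  define e where "e = v (l1 - l2)"
  have e: "e > 0" using ne by (simp add: e_def)
  obtain N1 where N1: "\<forall>n\<ge>N1. v (s n - l1) < e" using assms(1) e unfolding v_tendsto_iff by blast
  obtain N2 where N2: "\<forall>n\<ge>N2. v (s n - l2) < e" using assms(2) e unfolding v_tendsto_iff by blast
  have "l1 - l2 = (s (N1+N2) - l2) - (s (N1+N2) - l1)" by simp
  moreover have "v (s (N1+N2) - l2) < e" "v (s (N1+N2) - l1) < e" using N1 N2 by auto
  ultimately have "v (l1 - l2) < e"
    using v_diff[of "s (N1+N2) - l2" "s (N1+N2) - l1"] by (auto simp: max_def split: if_splits)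
  thus False by (simp add: e_def)
qed

lemma v_tendsto_eventually_const: assumes "\<forall>n\<ge>N. s n = c" shows "v_tendsto v s c"
  unfolding v_tendsto_iff using assms by (intro allI impI exI[of _ N]) auto

lemma v_tendsto_add: assumes "v_tendsto v s l" "v_tendsto v t m"
  shows "v_tendsto v (\<lambda>n. s n + t n) (l + m)"
  unfolding v_tendsto_iff
proof (intro allI impI)
  fix e :: real assume e: "e > 0"
  obtain N1 where N1: "\<forall>n\<ge>N1. v (s n - l) < e" using assms(1) e unfolding v_tendsto_iff by blast
  obtain N2 where N2: "\<forall>n\<ge>N2. v (t n - m) < e" using assms(2) e unfolding v_tendsto_iff by blast
  have "v (s n + t n - (l + m)) < e" if "n \<ge> N1 + N2" for n
  proof -
    have eq: "s n + t n - (l + m) = (s n - l) + (t n - m)" by simp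
    show ?thesis unfolding eq using N1 N2 that by (intro v_add_lt) auto
  qed
  thus "\<exists>N. \<forall>n\<ge>N. v (s n + t n - (l + m)) < e" by blast
qed

lemma v_tendsto_cmult: assumes "v_tendsto v s l"
  shows "v_tendsto v (\<lambda>n. c * s n) (c * l)"
  unfolding v_tendsto_iff
proof (intro allI impI)
  fix e :: real assume e: "e > 0"
  obtain N where N: "\<forall>n\<ge>N. v (s n - l) < e / (v c + 1)"
    using assms e unfolding v_tendsto_iff by (metis add_nonneg_pos divide_pos_pos v_nonneg zero_less_one)
  have "v (c * s n - c * l) < e" if "n \<ge> N" for n
  proof -
    have "v (c * s n - c * l) = v c * v (s n - l)" by (simp add: v_mult right_diff_distrib[symmetric])
    also have "\<dots> \<le> v c * (e / (v c + 1))" using N that by (intro mult_left_mono) auto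
    also have "\<dots> < e" using e by (intro mult_div_add_one_less) auto
    finally show ?thesis .
  qed
  thus "\<exists>N. \<forall>n\<ge>N. v (c * s n - c * l) < e" by blast
qed

lemma v_tendsto_bounded: assumes "v_tendsto v s l" shows "\<exists>B\<ge>0. \<forall>n. v (s n) \<le> B"
proof -
  obtain N where N: "\<forall>n\<ge>N. v (s n - l) < 1" using assms unfolding v_tendsto_iff by fastforce
  define B where "B = max (v l) 1 + (\<Sum>n<N. v (s n))"
  have B0: "B \<ge> 0" unfolding B_def by (intro add_nonneg_nonneg sum_nonneg) auto
  have "v (s n) \<le> B" for n
  proof (cases "n < N")
    case True
    have "v (s n) \<le> (\<Sum>n<N. v (s n))" using True by (intro member_le_sum) auto
    thus ?thesis unfolding B_def by linarith
  next
    case False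
    have "s n = (s n - l) + l" by simp
    hence "v (s n) \<le> max (v (s n - l)) (v l)" by (metis v_add)
    moreover have "v (s n - l) < 1" using N False by simp
    ultimately have "v (s n) \<le> max (v l) 1" by (auto simp: max_def split: if_splits)
    moreover have "0 \<le> (\<Sum>n<N. v (s n))" by (intro sum_nonneg) auto
    ultimately show ?thesis unfolding B_def by linarith
  qed
  thus ?thesis using B0 by blast
qed

lemma v_tendsto_mult: assumes "v_tendsto v s l" "v_tendsto v t m"
  shows "v_tendsto v (\<lambda>n. s n * t n) (l * m)"
proof -
  obtain B where B: "B \<ge> 0" "\<forall>n. v (t n) \<le> B" using v_tendsto_bounded[OF assms(2)] by blast
  show ?thesis unfolding v_tendsto_iff
  proof (intro allI impI)
    fix e :: real assume e: "e > 0"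
    obtain N1 where N1: "\<forall>n\<ge>N1. v (s n - l) < e / (B + 1)"
      using assms(1) e B unfolding v_tendsto_iff by (metis add_nonneg_pos divide_pos_pos zero_less_one)
    obtain N2 where N2: "\<forall>n\<ge>N2. v (t n - m) < e / (v l + 1)"
      using assms(2) e unfolding v_tendsto_iff by (metis add_nonneg_pos divide_pos_pos v_nonneg zero_less_one)
    have "v (s n * t n - l * m) < e" if "n \<ge> N1 + N2" for n
    proof -
      have eq: "s n * t n - l * m = (s n - l) * t n + l * (t n - m)" by (simp add: algebra_simps)
      have "v ((s n - l) * t n) = v (s n - l) * v (t n)" by (simp add: v_mult)
      also have "\<dots> \<le> (e / (B + 1)) * B" using N1 B that e
        by (intro mult_mono) (auto intro: less_imp_le)
      also have "\<dots> < e" using e B by (intro div_add_one_mult_less) auto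
      finally have 1: "v ((s n - l) * t n) < e" .
      have "v (l * (t n - m)) = v l * v (t n - m)" by (simp add: v_mult)
      also have "\<dots> \<le> v l * (e / (v l + 1))" using N2 that by (intro mult_left_mono) (auto intro: less_imp_le)
      also have "\<dots> < e" using e by (intro mult_div_add_one_less) auto
      finally have 2: "v (l * (t n - m)) < e" .
      show ?thesis unfolding eq using 1 2 by (rule v_add_lt)
    qed
    thus "\<exists>N. \<forall>n\<ge>N. v (s n * t n - l * m) < e" by blast
  qed
qed

lemma v_tendsto_le:
  assumes lim: "v_tendsto v s l" and r: "r > 0" and le: "\<And>j. v (s j) \<le> r"
  shows "v l \<le> r"
proof -
  obtain j where j: "v (s j - l) < r" using lim r unfolding v_tendsto_iff by blast
  have "v l \<le> max (v (s j)) (v (s j - l))" using v_diff[of "s j" "s j - l"] by simp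
  thus ?thesis using le[of j] j by linarith
qed

lemma v_cauchy_if_steps_small:
  assumes small: "\<And>e. e > 0 \<Longrightarrow> \<exists>J. \<forall>j\<ge>J. v (s j - s (Suc j)) < e"
  shows "v_cauchy v s"
  unfolding v_cauchy_def
proof (intro allI impI)
  fix e :: real assume e: "e > 0"
  obtain J where J: "\<forall>j\<ge>J. v (s j - s (Suc j)) < e" using small[OF e] by blast
  have fwd: "v (s j - s (j + m)) < e" if "j \<ge> J" for j m
  proof (induction m)
    case (Suc m)
    have "s j - s (j + Suc m) = (s j - s (j + m)) + (s (j + m) - s (Suc (j + m)))" by simp
    thus ?case using Suc J that by (metis le_add1 order_trans v_add_lt)
  qed (use e in simp)
  have "v (s m - s n) < e" if "m \<ge> J" "n \<ge> J" for m n
    using fwd[of m "n - m"] fwd[of n "m - n"] that v_minus_commute[of "s m"]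
    by (cases "m \<le> n") auto
  thus "\<exists>N. \<forall>m\<ge>N. \<forall>n\<ge>N. v (s m - s n) < e" by blast
qed

section \<open>Entire functions and the Gauss norm\<close>

definition partial_sum :: "(nat \<Rightarrow> 'a) \<Rightarrow> 'a \<Rightarrow> nat \<Rightarrow> 'a" where
  "partial_sum a z n = (\<Sum>k<n. a k * z ^ k)"

definition coeffs_decay :: "(nat \<Rightarrow> 'a) \<Rightarrow> bool" where
  "coeffs_decay a \<longleftrightarrow> (\<forall>r>0. \<forall>e>0. \<exists>N. \<forall>k\<ge>N. v (a k) * r ^ k < e)"

definition has_series :: "(nat \<Rightarrow> 'a) \<Rightarrow> ('a \<Rightarrow> 'a) \<Rightarrow> bool" where
  "has_series a f \<longleftrightarrow> (\<forall>z. v_tendsto v (partial_sum a z) (f z))"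

lemma coeffs_decay_bounded: assumes "coeffs_decay a" "r > 0" shows "\<exists>B\<ge>0. \<forall>k. v (a k) * r ^ k \<le> B"
proof -
  obtain N where N: "\<forall>k\<ge>N. v (a k) * r ^ k < 1" using assms unfolding coeffs_decay_def by fastforce
  define B where "B = 1 + (\<Sum>k<N. v (a k) * r ^ k)"
  have s0: "0 \<le> (\<Sum>k<N. v (a k) * r ^ k)" using assms(2) by (intro sum_nonneg) auto
  have "v (a k) * r ^ k \<le> B" for k
  proof (cases "k < N")
    case True
    have "v (a k) * r ^ k \<le> (\<Sum>k<N. v (a k) * r ^ k)" using True assms(2) by (intro member_le_sum) auto
    thus ?thesis unfolding B_def by linarith
  next
    case False
    hence "v (a k) * r ^ k < 1" using N by simp
    thus ?thesis using s0 unfolding B_def by linarith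
  qed
  moreover have "B \<ge> 0" using s0 unfolding B_def by linarith
  ultimately show ?thesis by blast
qed

lemma has_series_coeffs_decay:
  assumes "has_series a f" shows "coeffs_decay a"
  unfolding coeffs_decay_def
proof (intro allI impI)
  fix r e :: real assume r: "r > 0" and e: "e > 0"
  obtain z where z: "v z \<ge> r" using exists_v_ge by blast
  obtain N where N: "\<forall>n\<ge>N. v (partial_sum a z n - f z) < e"
    using assms e unfolding has_series_def v_tendsto_iff by blast
  have "v (a k) * r ^ k < e" if "k \<ge> N" for k
  proof -
    have "partial_sum a z (Suc k) - partial_sum a z k = (partial_sum a z (Suc k) - f z) - (partial_sum a z k - f z)" by simp
    moreover have "partial_sum a z (Suc k) - partial_sum a z k = a k * z ^ k" by (simp add: partial_sum_def)
    ultimately have "v (a k * z ^ k) < e" using N that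
      by (metis le_SucI v_diff le_less_trans max_less_iff_conj)
    hence "v (a k) * v z ^ k < e" by (simp add: v_mult v_power)
    moreover have "v (a k) * r ^ k \<le> v (a k) * v z ^ k"
      using z r by (intro mult_left_mono power_mono) auto
    ultimately show ?thesis by linarith
  qed
  thus "\<exists>N. \<forall>k\<ge>N. v (a k) * r ^ k < e" by blast
qed

lemma entire_iff_has_series: "entire v f \<longleftrightarrow> (\<exists>a. has_series a f)"
  by (simp add: entire_def has_series_def partial_sum_def[abs_def])

lemma has_series_eval_finite:
  assumes "has_series a f" "\<And>k. k \<ge> m \<Longrightarrow> a k * z ^ k = 0"
  shows "f z = partial_sum a z m"
proof -
  have "partial_sum a z n = partial_sum a z m" if "n \<ge> m" for n
    unfolding partial_sum_def using that assms(2) by (intro sum.mono_neutral_right) auto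
  hence "v_tendsto v (partial_sum a z) (partial_sum a z m)" by (intro v_tendsto_eventually_const) blast
  thus ?thesis using assms(1) v_tendsto_unique unfolding has_series_def by blast
qed

lemma has_series_at_0: "has_series a f \<Longrightarrow> f 0 = a 0"
  by (subst has_series_eval_finite[of a f 1]) (auto simp: partial_sum_def)

lemma has_series_const_coeffs: "has_series a f \<Longrightarrow> \<forall>k\<ge>1. a k = 0 \<Longrightarrow> f z = a 0"
  by (subst has_series_eval_finite[of a f 1]) (auto simp: partial_sum_def)

lemma has_series_const: "has_series (\<lambda>k. if k = 0 then c else 0) (\<lambda>z. c)"
  unfolding has_series_def
proof
  fix z
  have "partial_sum (\<lambda>k. if k = 0 then c else 0) z n = c" if "n \<ge> 1" for n
  proof -
    have "partial_sum (\<lambda>k. if k = 0 then c else 0) z n = (\<Sum>k\<in>{..<n}. if k = 0 then c else 0)"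
      unfolding partial_sum_def by (intro sum.cong) auto
    also have "\<dots> = c" using that by (subst sum.delta) auto
    finally show ?thesis .
  qed
  thus "v_tendsto v (partial_sum (\<lambda>k. if k = 0 then c else 0) z) c" by (intro v_tendsto_eventually_const) auto
qed

lemma has_series_add:
  assumes "has_series a f" "has_series b g"
  shows "has_series (\<lambda>k. a k + b k) (\<lambda>z. f z + g z)"
  unfolding has_series_def
proof
  fix z
  have "partial_sum (\<lambda>k. a k + b k) z = (\<lambda>n. partial_sum a z n + partial_sum b z n)"
    by (auto simp: partial_sum_def distrib_right sum.distrib)
  thus "v_tendsto v (partial_sum (\<lambda>k. a k + b k) z) (f z + g z)"
    using assms unfolding has_series_def by (auto intro: v_tendsto_add)
qed

lemma has_series_cmult: assumes "has_series a f" shows "has_series (\<lambda>k. c * a k) (\<lambda>z. c * f z)"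
  unfolding has_series_def
proof
  fix z
  have "partial_sum (\<lambda>k. c * a k) z = (\<lambda>n. c * partial_sum a z n)"
    by (auto simp: partial_sum_def sum_distrib_left mult.assoc)
  thus "v_tendsto v (partial_sum (\<lambda>k. c * a k) z) (c * f z)"
    using assms unfolding has_series_def by (auto intro: v_tendsto_cmult)
qed

definition cauchy_product :: "(nat \<Rightarrow> 'a) \<Rightarrow> (nat \<Rightarrow> 'a) \<Rightarrow> nat \<Rightarrow> 'a" where
  "cauchy_product a b n = (\<Sum>i\<le>n. a i * b (n - i))"

lemma coeff_products_small:
  assumes "coeffs_decay a" "coeffs_decay b" "r > 0" "e > 0"
  shows "\<exists>N1 N2. \<forall>i j. (i \<ge> N1 \<or> j \<ge> N2) \<longrightarrow> (v (a i) * r ^ i) * (v (b j) * r ^ j) < e"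
proof -
  obtain A where A: "A \<ge> 0" "\<forall>k. v (a k) * r ^ k \<le> A" using coeffs_decay_bounded[OF assms(1,3)] by blast
  obtain B where B: "B \<ge> 0" "\<forall>k. v (b k) * r ^ k \<le> B" using coeffs_decay_bounded[OF assms(2,3)] by blast
  obtain N1 where N1: "\<forall>k\<ge>N1. v (a k) * r ^ k < e / (B + 1)"
    using assms B unfolding coeffs_decay_def by (metis add_nonneg_pos divide_pos_pos zero_less_one)
  obtain N2 where N2: "\<forall>k\<ge>N2. v (b k) * r ^ k < e / (A + 1)"
    using assms A unfolding coeffs_decay_def by (metis add_nonneg_pos divide_pos_pos zero_less_one)
  have "(v (a i) * r ^ i) * (v (b j) * r ^ j) < e" if "i \<ge> N1 \<or> j \<ge> N2" for i j
  proof -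
    have ai: "0 \<le> v (a i) * r ^ i" and bj: "0 \<le> v (b j) * r ^ j" using assms(3) by auto
    show ?thesis
    proof (cases "i \<ge> N1")
      case True
      have "(v (a i) * r ^ i) * (v (b j) * r ^ j) \<le> (e / (B + 1)) * B"
        using N1 True B bj assms(4) by (intro mult_mono) (auto intro: less_imp_le)
      also have "\<dots> < e" using B assms(4) by (intro div_add_one_mult_less) auto
      finally show ?thesis .
    next
      case False
      hence "j \<ge> N2" using that by auto
      have "(v (a i) * r ^ i) * (v (b j) * r ^ j) \<le> A * (e / (A + 1))"
        using N2 \<open>j \<ge> N2\<close> A ai bj by (intro mult_mono) (auto intro: less_imp_le)
      also have "\<dots> < e" using A assms(4) by (intro mult_div_add_one_less) auto
      finally show ?thesis .
    qed
  qed
  thus ?thesis by blast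
qed

lemma coeffs_decay_cauchy_product:
  assumes "coeffs_decay a" "coeffs_decay b"
  shows "coeffs_decay (cauchy_product a b)"
  unfolding coeffs_decay_def
proof (intro allI impI)
  fix r e :: real assume r: "r > 0" and e: "e > 0"
  obtain N1 N2 where N: "\<forall>i j. (i \<ge> N1 \<or> j \<ge> N2) \<longrightarrow> (v (a i) * r ^ i) * (v (b j) * r ^ j) < e"
    using coeff_products_small[OF assms r e] by blast
  have "v (cauchy_product a b n) * r ^ n < e" if "n \<ge> N1 + N2" for n
  proof -
    have rn: "r ^ n > 0" using r by simp
    have "v (cauchy_product a b n) < e / r ^ n" unfolding cauchy_product_def
    proof (rule v_sum_lt)
      fix i assume i: "i \<in> {..n}"
      have "v (a i * b (n - i)) * r ^ n = (v (a i) * r ^ i) * (v (b (n - i)) * r ^ (n - i))"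
        using i by (simp add: v_mult power_add[symmetric] algebra_simps)
      also have "\<dots> < e" using N that by (intro N[rule_format]) linarith
      finally show "v (a i * b (n - i)) < e / r ^ n" using rn by (simp add: field_simps)
    qed (use e rn in auto)
    thus ?thesis using rn by (simp add: field_simps)
  qed
  thus "\<exists>N. \<forall>k\<ge>N. v (cauchy_product a b k) * r ^ k < e" by blast
qed

lemma partial_sum_cauchy_product: "partial_sum (cauchy_product a b) z n = (\<Sum>(i,j)\<in>{(i,j). i+j < n}. (a i * z ^ i) * (b j * z ^ j))"
proof -
  have "partial_sum (cauchy_product a b) z n = (\<Sum>k<n. \<Sum>i\<le>k. (a i * z ^ i) * (b (k - i) * z ^ (k - i)))"
    unfolding partial_sum_def cauchy_product_def sum_distrib_right
    by (intro sum.cong refl) (auto simp: power_add[symmetric] algebra_simps)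
  also have "\<dots> = (\<Sum>(i,j)\<in>{(i,j). i+j < n}. (a i * z ^ i) * (b j * z ^ j))"
    by (rule sum.triangle_reindex[symmetric])
  finally show ?thesis .
qed

lemma partial_sum_mult: "partial_sum a z n * partial_sum b z n = (\<Sum>(i,j)\<in>{..<n}\<times>{..<n}. (a i * z ^ i) * (b j * z ^ j))"
  unfolding partial_sum_def sum_product sum.cartesian_product by simp

lemma partial_sum_cauchy_product_diff:
  assumes va: "coeffs_decay a" and vb: "coeffs_decay b"
  shows "v_tendsto v (\<lambda>n. partial_sum (cauchy_product a b) z n - partial_sum a z n * partial_sum b z n) 0"
  unfolding v_tendsto_iff
proof (intro allI impI)
  define r where "r = v z + 1"
  have r: "r > 0" "v z \<le> r" unfolding r_def using v_nonneg[of z] by linarith+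
  fix e :: real assume e: "e > 0"
  obtain N1 N2 where N: "\<forall>i j. (i \<ge> N1 \<or> j \<ge> N2) \<longrightarrow> (v (a i) * r ^ i) * (v (b j) * r ^ j) < e"
    using coeff_products_small[OF va vb r(1) e] by blast
  have "v (partial_sum (cauchy_product a b) z n - partial_sum a z n * partial_sum b z n - 0) < e" if n: "n \<ge> N1 + N2" for n
  proof -
    define T where "T = {(i,j). i + j < n}"
    define Q where "Q = {..<n} \<times> {..<n}"
    have TQ: "T \<subseteq> Q" "finite Q" unfolding T_def Q_def by auto
    define h where "h = (\<lambda>(i,j). (a i * z ^ i) * (b j * z ^ j))"
    have "partial_sum (cauchy_product a b) z n - partial_sum a z n * partial_sum b z n = sum h T - sum h Q"
      unfolding partial_sum_cauchy_product partial_sum_mult T_def Q_def h_def by simp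
    also have "\<dots> = - sum h (Q - T)" using sum.subset_diff[OF TQ, of h] by simp
    finally have eq: "partial_sum (cauchy_product a b) z n - partial_sum a z n * partial_sum b z n = - sum h (Q - T)" .
    have "v (sum h (Q - T)) < e"
    proof (rule v_sum_lt)
      fix p assume p: "p \<in> Q - T"
      obtain i j where ij: "p = (i, j)" by fastforce
      have "i + j \<ge> n" using p ij unfolding T_def by auto
      hence "i \<ge> N1 \<or> j \<ge> N2" using n by linarith
      hence lt: "(v (a i) * r ^ i) * (v (b j) * r ^ j) < e" using N by blast
      have "v (h p) = (v (a i) * v z ^ i) * (v (b j) * v z ^ j)"
        unfolding ij h_def by (simp add: v_mult v_power)
      also have "\<dots> \<le> (v (a i) * r ^ i) * (v (b j) * r ^ j)"
        using r by (intro mult_mono mult_left_mono power_mono) auto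
      finally show "v (h p) < e" using lt by linarith
    qed (use TQ e in auto)
    thus ?thesis using eq by simp
  qed
  thus "\<exists>N. \<forall>n\<ge>N. v (partial_sum (cauchy_product a b) z n - partial_sum a z n * partial_sum b z n - 0) < e" by blast
qed

lemma has_series_mult:
  assumes "has_series a f" "has_series b g"
  shows "has_series (cauchy_product a b) (\<lambda>z. f z * g z)"
  unfolding has_series_def
proof
  fix z
  have "v_tendsto v (\<lambda>n. partial_sum a z n * partial_sum b z n) (f z * g z)"
    using assms unfolding has_series_def by (auto intro: v_tendsto_mult)
  from v_tendsto_add[OF partial_sum_cauchy_product_diff[where z = z, OF has_series_coeffs_decay[OF assms(1)]
      has_series_coeffs_decay[OF assms(2)]] this]
  show "v_tendsto v (partial_sum (cauchy_product a b) z) (f z * g z)" by simp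
qed

lemma entire_const[simp, intro]: "entire v (\<lambda>z. c)"
  unfolding entire_iff_has_series using has_series_const by blast

lemma entire_add[intro]: "entire v f \<Longrightarrow> entire v g \<Longrightarrow> entire v (\<lambda>z. f z + g z)"
  unfolding entire_iff_has_series using has_series_add by blast

lemma entire_mult[intro]: "entire v f \<Longrightarrow> entire v g \<Longrightarrow> entire v (\<lambda>z. f z * g z)"
  unfolding entire_iff_has_series using has_series_mult by blast

lemma entire_cmult[intro]: "entire v f \<Longrightarrow> entire v (\<lambda>z. c * f z)"
  unfolding entire_iff_has_series using has_series_cmult by blast

lemma entire_uminus[intro]: "entire v f \<Longrightarrow> entire v (\<lambda>z. - f z)"
  using entire_cmult[of f "-1"] by simp

lemma entire_diff[intro]: "entire v f \<Longrightarrow> entire v g \<Longrightarrow> entire v (\<lambda>z. f z - g z)"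
  using entire_add[of f "\<lambda>z. - g z"] entire_uminus[of g] by simp

lemma entire_sum[intro]: "(\<And>i. i \<in> S \<Longrightarrow> entire v (f i)) \<Longrightarrow> entire v (\<lambda>z. \<Sum>i\<in>S. f i z)"
  by (induction S rule: infinite_finite_induct) auto

lemma entire_prod[intro]: "(\<And>i. i \<in> S \<Longrightarrow> entire v (f i)) \<Longrightarrow> entire v (\<lambda>z. \<Prod>i\<in>S. f i z)"
  by (induction S rule: infinite_finite_induct) auto

lemma entire_power[intro]: "entire v f \<Longrightarrow> entire v (\<lambda>z. f z ^ n)"
  by (induction n) auto

definition max_term :: "real \<Rightarrow> (nat \<Rightarrow> 'a) \<Rightarrow> real" where
  "max_term r a = (SUP k. v (a k) * r ^ k)"

lemma max_term_bdd: "coeffs_decay a \<Longrightarrow> r > 0 \<Longrightarrow> bdd_above (range (\<lambda>k. v (a k) * r ^ k))"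
  using coeffs_decay_bounded by (auto simp: bdd_above_def) blast

lemma max_term_ge: "coeffs_decay a \<Longrightarrow> r > 0 \<Longrightarrow> v (a k) * r ^ k \<le> max_term r a"
  unfolding max_term_def by (rule cSUP_upper[OF _ max_term_bdd]) auto

lemma max_term_le: "(\<And>k. v (a k) * r ^ k \<le> B) \<Longrightarrow> max_term r a \<le> B"
  unfolding max_term_def by (rule cSUP_least) auto

lemma max_term_nonneg: "coeffs_decay a \<Longrightarrow> r > 0 \<Longrightarrow> 0 \<le> max_term r a"
  using max_term_ge[of a r 0] v_nonneg[of "a 0"] by (simp del: v_nonneg)

lemma max_term_attained: assumes "coeffs_decay a" "r > 0" shows "\<exists>k. max_term r a = v (a k) * r ^ k"
proof (cases "\<forall>k. a k = 0")
  case True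
  have "max_term r a \<le> 0" by (rule max_term_le) (use True in auto)
  hence "max_term r a = v (a 0) * r ^ 0" using max_term_nonneg[OF assms] True by simp
  thus ?thesis by blast
next
  case False
  then obtain k0 where k0: "a k0 \<noteq> 0" by blast
  define m where "m = v (a k0) * r ^ k0"
  have m: "m > 0" unfolding m_def using k0 assms by simp
  obtain N where N: "\<forall>k\<ge>N. v (a k) * r ^ k < m" using assms m unfolding coeffs_decay_def by blast
  define N' where "N' = max N (Suc k0)"
  define M where "M = Max ((\<lambda>k. v (a k) * r ^ k) ` {..<N'})"
  have fin: "finite ((\<lambda>k. v (a k) * r ^ k) ` {..<N'})" "(\<lambda>k. v (a k) * r ^ k) ` {..<N'} \<noteq> {}"
    unfolding N'_def by (auto simp: lessThan_empty_iff)
  obtain k1 where k1: "k1 < N'" "M = v (a k1) * r ^ k1"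
    using Max_in[OF fin] unfolding M_def by auto
  have mM: "m \<le> M" unfolding M_def m_def by (rule Max_ge[OF fin(1)]) (auto simp: N'_def)
  have "v (a k) * r ^ k \<le> M" for k
  proof (cases "k < N'")
    case True thus ?thesis unfolding M_def by (intro Max_ge[OF fin(1)]) auto
  next
    case False
    hence "k \<ge> N" unfolding N'_def by simp
    hence "v (a k) * r ^ k < m" using N by simp
    thus ?thesis using mM by linarith
  qed
  hence "max_term r a \<le> M" by (intro max_term_le)
  moreover have "M \<le> max_term r a" using k1 max_term_ge[OF assms] by simp
  ultimately show ?thesis using k1 by (intro exI[of _ k1]) simp
qed

lemma max_term_cauchy_product_le:
  assumes "coeffs_decay a" "coeffs_decay b" "r > 0"
  shows "max_term r (cauchy_product a b) \<le> max_term r a * max_term r b"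
proof (rule max_term_le)
  fix n
  have rn: "r ^ n > 0" using assms by simp
  have "v (cauchy_product a b n) \<le> max_term r a * max_term r b / r ^ n" unfolding cauchy_product_def
  proof (rule v_sum_le)
    fix i assume i: "i \<in> {..n}"
    have "v (a i * b (n - i)) * r ^ n = (v (a i) * r ^ i) * (v (b (n - i)) * r ^ (n - i))"
      using i by (simp add: v_mult power_add[symmetric] algebra_simps)
    also have "\<dots> \<le> max_term r a * max_term r b"
      using max_term_ge[OF assms(1,3)] max_term_ge[OF assms(2,3)] max_term_nonneg[OF assms(1,3)] assms(3)
      by (intro mult_mono) auto
    finally show "v (a i * b (n - i)) \<le> max_term r a * max_term r b / r ^ n" using rn by (simp add: field_simps)
  qed (use max_term_nonneg[OF assms(1,3)] max_term_nonneg[OF assms(2,3)] rn in auto)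
  thus "v (cauchy_product a b n) * r ^ n \<le> max_term r a * max_term r b" using rn by (simp add: field_simps)
qed

lemma max_term_cauchy_product:
  assumes "coeffs_decay a" "coeffs_decay b" "r > 0"
  shows "max_term r (cauchy_product a b) = max_term r a * max_term r b"
proof (cases "max_term r a = 0 \<or> max_term r b = 0")
  case True
  thus ?thesis using max_term_cauchy_product_le[OF assms] max_term_nonneg[OF coeffs_decay_cauchy_product[OF assms(1,2)] assms(3)] by auto
next
  case False
  let ?A = "max_term r a" and ?B = "max_term r b"
  have A: "?A > 0" and B: "?B > 0" using False max_term_nonneg[OF assms(1,3)] max_term_nonneg[OF assms(2,3)] by auto
  define i0 where "i0 = (LEAST i. ?A = v (a i) * r ^ i)"
  define j0 where "j0 = (LEAST j. ?B = v (b j) * r ^ j)"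
  have i0: "?A = v (a i0) * r ^ i0" unfolding i0_def by (rule LeastI_ex[OF max_term_attained[OF assms(1,3)]])
  have j0: "?B = v (b j0) * r ^ j0" unfolding j0_def by (rule LeastI_ex[OF max_term_attained[OF assms(2,3)]])
  have i0l: "v (a i) * r ^ i < ?A" if "i < i0" for i
    using max_term_ge[OF assms(1,3), of i] not_less_Least[OF that[unfolded i0_def]] by fastforce
  have j0l: "v (b j) * r ^ j < ?B" if "j < j0" for j
    using max_term_ge[OF assms(2,3), of j] not_less_Least[OF that[unfolded j0_def]] by fastforce
  define n where "n = i0 + j0"
  have rn: "r ^ n > 0" using assms by simp
  have split: "cauchy_product a b n = a i0 * b j0 + (\<Sum>i\<in>{..n} - {i0}. a i * b (n - i))"
    unfolding cauchy_product_def by (subst sum.remove[of _ i0]) (auto simp: n_def)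
  have main: "v (a i0 * b j0) * r ^ n = ?A * ?B"
    using i0 j0 by (simp add: v_mult n_def power_add algebra_simps)
  have "v (\<Sum>i\<in>{..n} - {i0}. a i * b (n - i)) < ?A * ?B / r ^ n"
  proof (rule v_sum_lt)
    fix i assume i: "i \<in> {..n} - {i0}"
    have eq: "v (a i * b (n - i)) * r ^ n = (v (a i) * r ^ i) * (v (b (n - i)) * r ^ (n - i))"
      using i by (simp add: v_mult power_add[symmetric] algebra_simps)
    have ai: "0 \<le> v (a i) * r ^ i" "v (a i) * r ^ i \<le> ?A" using max_term_ge[OF assms(1,3)] assms(3) by auto
    have bi: "0 \<le> v (b (n-i)) * r ^ (n-i)" "v (b (n-i)) * r ^ (n-i) \<le> ?B" using max_term_ge[OF assms(2,3)] assms(3) by auto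
    have "(v (a i) * r ^ i) * (v (b (n - i)) * r ^ (n - i)) < ?A * ?B"
    proof (cases "i < i0")
      case True
      thus ?thesis using i0l[OF True] bi B ai(1) by (intro mult_less_of_less_le) auto
    next
      case False
      hence "n - i < j0" using i unfolding n_def by auto
      thus ?thesis using j0l ai A bi(1) by (intro mult_less_of_le_less) auto
    qed
    thus "v (a i * b (n - i)) < ?A * ?B / r ^ n" using eq rn by (simp add: field_simps)
  qed (use A B rn in auto)
  hence "r ^ n * v (\<Sum>i\<in>{..n} - {i0}. a i * b (n - i)) < r ^ n * v (a i0 * b j0)"
    using main rn by (simp add: field_simps)
  hence "v (\<Sum>i\<in>{..n} - {i0}. a i * b (n - i)) < v (a i0 * b j0)"
    using rn by (simp add: mult_less_cancel_left_pos)
  hence "v (cauchy_product a b n) = v (a i0 * b j0)"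
    unfolding split by (rule v_add_dominant)
  hence "?A * ?B \<le> max_term r (cauchy_product a b)" using max_term_ge[OF coeffs_decay_cauchy_product[OF assms(1,2)] assms(3), of n] main by simp
  thus ?thesis using max_term_cauchy_product_le[OF assms] by linarith
qed

lemma has_series_zero: assumes "has_series c (\<lambda>z. 0)" shows "c = (\<lambda>k. 0)"
proof (rule ccontr)
  assume "c \<noteq> (\<lambda>k. 0)"
  then obtain k where "c k \<noteq> 0" by auto
  define m where "m = (LEAST k. c k \<noteq> 0)"
  have cm: "c m \<noteq> 0" unfolding m_def using LeastI[of "\<lambda>k. c k \<noteq> 0" k] \<open>c k \<noteq> 0\<close> by simp
  have below: "c k = 0" if "k < m" for k using not_less_Least[OF that[unfolded m_def]] by simp
  have vcc: "coeffs_decay c" using has_series_coeffs_decay[OF assms] .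
  obtain A where A: "A \<ge> 0" "\<forall>k. v (c k) * 1 ^ k \<le> A" using coeffs_decay_bounded[OF vcc, of 1] by auto
  have "v (c m) \<le> A" using A(2)[rule_format, of m] by simp
  moreover have "0 < v (c m)" using cm by simp
  ultimately have Apos: "A > 0" by linarith
  obtain z where z: "z \<noteq> 0" "v z < min 1 (v (c m) / A)"
    using exists_nonzero_v_less[of "min 1 (v (c m) / A)"] cm Apos by auto
  have vz: "0 < v z" "v z < 1" "A * v z < v (c m)" using z Apos by (auto simp: field_simps)
  define e where "e = v (c m) * v z ^ m"
  have e: "e > 0" unfolding e_def using cm vz by simp
  obtain N where N: "\<forall>n\<ge>N. v (partial_sum c z n - 0) < e" using assms e unfolding has_series_def v_tendsto_iff by blast
  define n where "n = N + m + 1"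
  have "partial_sum c z n = c m * z ^ m + (\<Sum>k\<in>{..<n} - {m}. c k * z ^ k)"
    unfolding partial_sum_def by (subst sum.remove[of _ m]) (auto simp: n_def)
  moreover have "v (\<Sum>k\<in>{..<n} - {m}. c k * z ^ k) < e"
  proof (rule v_sum_lt)
    fix k assume k: "k \<in> {..<n} - {m}"
    show "v (c k * z ^ k) < e"
    proof (cases "k < m")
      case True thus ?thesis using below e by simp
    next
      case False
      hence km: "k \<ge> Suc m" using k by auto
      have "v (c k * z ^ k) = v (c k) * v z ^ k" by (simp add: v_mult v_power)
      also have "\<dots> \<le> A * v z ^ k" using A(2) vz by (intro mult_right_mono) auto
      also have "\<dots> \<le> A * v z ^ Suc m" using A(1) vz km by (intro mult_left_mono power_decreasing) auto
      also have "\<dots> = (A * v z) * v z ^ m" by simp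
      also have "\<dots> < e" unfolding e_def using vz by (intro mult_strict_right_mono) auto
      finally show ?thesis .
    qed
  qed (use e in auto)
  moreover have "v (c m * z ^ m) = e" unfolding e_def by (simp add: v_mult v_power)
  ultimately have "v (partial_sum c z n) = e" using v_add_dominant by simp
  moreover have "v (partial_sum c z n - 0) < e" using N unfolding n_def by auto
  ultimately show False by simp
qed

lemma has_series_unique: assumes "has_series a f" "has_series b f" shows "a = b"
proof -
  have "has_series (\<lambda>k. a k + (-1) * b k) (\<lambda>z. f z + (-1) * f z)"
    using has_series_add[OF assms(1) has_series_cmult[OF assms(2)]] .
  hence "has_series (\<lambda>k. a k + (-1) * b k) (\<lambda>z. 0)" by simp
  hence "(\<lambda>k. a k + (-1) * b k) = (\<lambda>k. 0)" by (rule has_series_zero)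
  thus ?thesis by (auto simp: fun_eq_iff)
qed

definition coeffs_of :: "('a \<Rightarrow> 'a) \<Rightarrow> nat \<Rightarrow> 'a" where
  "coeffs_of f = (SOME a. has_series a f)"

definition gauss_norm :: "real \<Rightarrow> ('a \<Rightarrow> 'a) \<Rightarrow> real" where
  "gauss_norm r f = max_term r (coeffs_of f)"

lemma coeffs_of_eq: "has_series a f \<Longrightarrow> coeffs_of f = a"
  unfolding coeffs_of_def by (rule some_equality) (auto intro: has_series_unique)

lemma has_series_coeffs_of: "entire v f \<Longrightarrow> has_series (coeffs_of f) f"
  unfolding entire_iff_has_series using coeffs_of_eq by auto

lemma gauss_norm_has_series: "has_series a f \<Longrightarrow> gauss_norm r f = max_term r a"
  unfolding gauss_norm_def using coeffs_of_eq by simp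

lemma gauss_norm_nonneg: "entire v f \<Longrightarrow> r > 0 \<Longrightarrow> 0 \<le> gauss_norm r f"
  unfolding gauss_norm_def using has_series_coeffs_of max_term_nonneg has_series_coeffs_decay by blast

lemma gauss_norm_coeff: assumes "has_series a f" "r > 0" shows "v (a k) * r ^ k \<le> gauss_norm r f"
  using max_term_ge[OF has_series_coeffs_decay[OF assms(1)] assms(2), of k] gauss_norm_has_series[OF assms(1), of r]
  by simp

lemma gauss_norm_mult:
  assumes "entire v f" "entire v g" "r > 0"
  shows "gauss_norm r (\<lambda>z. f z * g z) = gauss_norm r f * gauss_norm r g"
proof -
  obtain a b where a: "has_series a f" and b: "has_series b g" using assms unfolding entire_iff_has_series by blast
  show ?thesis using has_series_mult[OF a b] gauss_norm_has_series[OF a] gauss_norm_has_series[OF b] gauss_norm_has_series[OF has_series_mult[OF a b]]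
      max_term_cauchy_product[OF has_series_coeffs_decay[OF a] has_series_coeffs_decay[OF b] assms(3)] by simp
qed

lemma gauss_norm_const: assumes "r > 0" shows "gauss_norm r (\<lambda>z. c) = v c"
proof -
  have "gauss_norm r (\<lambda>z. c) = max_term r (\<lambda>k. if k = 0 then c else 0)" by (rule gauss_norm_has_series[OF has_series_const])
  also have "\<dots> = v c"
  proof (rule antisym)
    show "max_term r (\<lambda>k. if k = 0 then c else 0) \<le> v c" by (rule max_term_le) auto
    show "v c \<le> max_term r (\<lambda>k. if k = 0 then c else 0)"
      using max_term_ge[OF _ assms, of "\<lambda>k. if k = 0 then c else 0" 0] has_series_coeffs_decay[OF has_series_const[of c]] by simp
  qed
  finally show ?thesis .
qed

lemma gauss_norm_cmult:
  assumes "entire v f" "r > 0"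
  shows "gauss_norm r (\<lambda>z. c * f z) = v c * gauss_norm r f"
  using gauss_norm_mult[OF entire_const assms(1,2), of c] gauss_norm_const[OF assms(2)] by simp

lemma gauss_norm_uminus:
  assumes "entire v f" "r > 0"
  shows "gauss_norm r (\<lambda>z. - f z) = gauss_norm r f"
  using gauss_norm_cmult[OF assms, of "-1"] by simp

lemma gauss_norm_add:
  assumes "entire v f" "entire v g" "r > 0"
  shows "gauss_norm r (\<lambda>z. f z + g z) \<le> max (gauss_norm r f) (gauss_norm r g)"
proof -
  obtain a b where a: "has_series a f" and b: "has_series b g" using assms unfolding entire_iff_has_series by blast
  have "max_term r (\<lambda>k. a k + b k) \<le> max (max_term r a) (max_term r b)"
  proof (rule max_term_le)
    fix k
    have "v (a k + b k) * r ^ k \<le> max (v (a k)) (v (b k)) * r ^ k"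
      using assms(3) by (intro mult_right_mono v_add) auto
    also have "\<dots> = max (v (a k) * r ^ k) (v (b k) * r ^ k)" using assms(3) by (simp add: max_mult_distrib_right)
    also have "\<dots> \<le> max (max_term r a) (max_term r b)"
      using max_term_ge[OF has_series_coeffs_decay[OF a] assms(3), of k] max_term_ge[OF has_series_coeffs_decay[OF b] assms(3), of k]
      by (auto simp: max_def)
    finally show "v (a k + b k) * r ^ k \<le> max (max_term r a) (max_term r b)" .
  qed
  thus ?thesis using gauss_norm_has_series[OF a] gauss_norm_has_series[OF b] gauss_norm_has_series[OF has_series_add[OF a b]] by simp
qed

lemma gauss_norm_add_le: assumes "entire v f" "entire v g" "r > 0" "gauss_norm r f \<le> B" "gauss_norm r g \<le> B"
  shows "gauss_norm r (\<lambda>z. f z + g z) \<le> B"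
  using gauss_norm_add[OF assms(1-3)] assms(4,5) by linarith

lemma gauss_norm_diff:
  assumes "entire v f" "entire v g" "r > 0"
  shows "gauss_norm r (\<lambda>z. f z - g z) \<le> max (gauss_norm r f) (gauss_norm r g)"
  using gauss_norm_add[OF assms(1) entire_uminus[OF assms(2)] assms(3)] gauss_norm_uminus[OF assms(2,3)] by simp

lemma gauss_norm_diff_le: assumes "entire v f" "entire v g" "r > 0" "gauss_norm r f \<le> B" "gauss_norm r g \<le> B"
  shows "gauss_norm r (\<lambda>z. f z - g z) \<le> B"
  using gauss_norm_diff[OF assms(1-3)] assms(4,5) by linarith

lemma gauss_norm_sum_le: assumes "\<And>i. i \<in> S \<Longrightarrow> entire v (f i)" "\<And>i. i \<in> S \<Longrightarrow> gauss_norm r (f i) \<le> B" "0 \<le> B" "r > 0"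
  shows "gauss_norm r (\<lambda>z. \<Sum>i\<in>S. f i z) \<le> B"
  using assms
proof (induction S rule: infinite_finite_induct)
  case (infinite S) thus ?case using gauss_norm_const[of r 0] by simp
next
  case empty thus ?case using gauss_norm_const[of r 0] by simp
next
  case (insert x F)
  have "gauss_norm r (\<lambda>z. f x z + (\<Sum>i\<in>F. f i z)) \<le> B"
    using insert by (intro gauss_norm_add_le) auto
  thus ?case using insert by simp
qed

lemma gauss_norm_prod: assumes "\<And>i. i \<in> S \<Longrightarrow> entire v (f i)" "r > 0"
  shows "gauss_norm r (\<lambda>z. \<Prod>i\<in>S. f i z) = (\<Prod>i\<in>S. gauss_norm r (f i))"
  using assms
proof (induction S rule: infinite_finite_induct)
  case (infinite S) thus ?case using gauss_norm_const[of r 1] by simp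
next
  case empty thus ?case using gauss_norm_const[of r 1] by simp
next
  case (insert x F)
  have "gauss_norm r (\<lambda>z. f x z * (\<Prod>i\<in>F. f i z)) = gauss_norm r (f x) * gauss_norm r (\<lambda>z. \<Prod>i\<in>F. f i z)"
    using insert by (intro gauss_norm_mult) auto
  thus ?case using insert by simp
qed

lemma gauss_norm_power:
  assumes "entire v f" "r > 0"
  shows "gauss_norm r (\<lambda>z. f z ^ n) = gauss_norm r f ^ n"
proof (induction n)
  case 0 thus ?case using gauss_norm_const[OF assms(2), of 1] by simp
next
  case (Suc n)
  have "gauss_norm r (\<lambda>z. f z * f z ^ n) = gauss_norm r f * gauss_norm r (\<lambda>z. f z ^ n)"
    using assms by (intro gauss_norm_mult) auto
  thus ?case using Suc by simp
qed

lemma entire_const_if_gauss_norm_bounded: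
  assumes "entire v f" "\<forall>R. \<exists>r\<ge>R. r > 0 \<and> gauss_norm r f \<le> B"
  shows "\<exists>c. \<forall>z. f z = c"
proof -
  obtain a where a: "has_series a f" using assms unfolding entire_iff_has_series by blast
  have "a k = 0" if k: "k \<ge> 1" for k
  proof (rule ccontr)
    assume "a k \<noteq> 0"
    then obtain R where R: "R \<ge> 1" "B < v (a k) * R ^ k" using exists_power_gt[of "v (a k)" k B] k by auto
    obtain r where r: "r \<ge> R" "r > 0" "gauss_norm r f \<le> B" using assms(2) by blast
    have "v (a k) * R ^ k \<le> v (a k) * r ^ k" using R r by (intro mult_left_mono power_mono) auto
    also have "\<dots> \<le> gauss_norm r f" by (rule gauss_norm_coeff[OF a r(2)])
    finally show False using R r by linarith
  qed
  thus ?thesis using has_series_const_coeffs[OF a] by blast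
qed

lemma gauss_norm_unbounded:
  assumes "entire v f" "\<not> (\<exists>c. \<forall>z. f z = c)"
  shows "\<exists>R>0. \<forall>r\<ge>R. gauss_norm r f > B"
proof -
  obtain R where R: "\<forall>r\<ge>R. r > 0 \<longrightarrow> gauss_norm r f > B"
    using entire_const_if_gauss_norm_bounded[OF assms(1), of B] assms(2) by (meson not_le)
  define R' where "R' = max R 1"
  have "\<forall>r\<ge>R'. gauss_norm r f > B" using R unfolding R'_def by auto
  moreover have "R' > 0" unfolding R'_def by simp
  ultimately show ?thesis by blast
qed

section \<open>Zero-free entire functions are constant\<close>

lemma v_prod_neg: "v (\<Prod>x\<leftarrow>xs. - (x::'a)) = (\<Prod>x\<leftarrow>xs. v x)"
  by (induction xs) (auto simp: v_mult)

definition coeffs_bounded :: "real \<Rightarrow> 'a poly \<Rightarrow> real \<Rightarrow> bool" where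
  "coeffs_bounded r p B \<longleftrightarrow> (\<forall>k. v (coeff p k) * r ^ k \<le> B)"

lemma coeffs_bounded_mult: assumes "coeffs_bounded r p B1" "coeffs_bounded r q B2" "0 \<le> B1" "0 \<le> B2" "r > 0"
  shows "coeffs_bounded r (p * q) (B1 * B2)"
  unfolding coeffs_bounded_def
proof
  fix n
  have rn: "r ^ n > 0" using assms by simp
  have "v (coeff (p * q) n) \<le> B1 * B2 / r ^ n" unfolding coeff_mult
  proof (rule v_sum_le)
    fix i assume i: "i \<in> {..n}"
    have "v (coeff p i * coeff q (n - i)) * r ^ n = (v (coeff p i) * r ^ i) * (v (coeff q (n - i)) * r ^ (n - i))"
      using i by (simp add: v_mult power_add[symmetric] algebra_simps)
    also have "\<dots> \<le> B1 * B2"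
      using assms unfolding coeffs_bounded_def by (intro mult_mono) auto
    finally show "v (coeff p i * coeff q (n - i)) \<le> B1 * B2 / r ^ n" using rn by (simp add: field_simps)
  qed (use assms rn in auto)
  thus "v (coeff (p * q) n) * r ^ n \<le> B1 * B2" using rn by (simp add: field_simps)
qed

lemma coeffs_bounded_linear: assumes "v x \<ge> r" "r > 0" shows "coeffs_bounded r [:-x, 1:] (v x)"
  unfolding coeffs_bounded_def
proof
  fix k show "v (coeff [:-x, 1:] k) * r ^ k \<le> v x"
    using assms by (cases k) (auto simp: coeff_pCons split: nat.splits)
qed

lemma coeffs_bounded_prod: assumes "\<forall>x\<in>set xs. v x \<ge> r" "r > 0"
  shows "coeffs_bounded r (\<Prod>x\<leftarrow>xs. [:-x, 1:]) (\<Prod>x\<leftarrow>xs. v x)"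
  using assms
proof (induction xs)
  case Nil thus ?case unfolding coeffs_bounded_def by (auto simp: coeff_1 less_imp_le)
next
  case (Cons x xs)
  have "coeffs_bounded r ([:-x, 1:] * (\<Prod>x\<leftarrow>xs. [:-x, 1:])) (v x * (\<Prod>x\<leftarrow>xs. v x))"
    using Cons by (intro coeffs_bounded_mult coeffs_bounded_linear prod_list_nonneg) auto
  thus ?case by (simp only: list.map prod_list.Cons)
qed

lemma coeffs_bounded_smult:
  assumes "coeffs_bounded r p B"
  shows "coeffs_bounded r (smult c p) (v c * B)"
  using assms unfolding coeffs_bounded_def
  by (auto simp: v_mult mult.assoc intro!: mult_left_mono)

lemma v_prod_list: "v (prod_list xs) = (\<Prod>x\<leftarrow>xs. v x)"
  by (induction xs) (auto simp: v_mult)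

lemma v_poly_0_split:
  assumes "p = smult c (\<Prod>x\<leftarrow>xs. [:-x, 1:])"
  shows "v (poly p 0) = v c * (\<Prod>x\<leftarrow>xs. v x)"
proof -
  have "poly p 0 = c * (\<Prod>x\<leftarrow>xs. - x)"
    using assms by (simp only: poly_smult poly_prod_linear_0)
  thus ?thesis by (simp add: v_mult v_prod_neg)
qed

definition truncation :: "(nat \<Rightarrow> 'a) \<Rightarrow> nat \<Rightarrow> 'a poly" where
  "truncation a n = (\<Sum>i\<le>n. monom (a i) i)"

lemma coeff_truncation: "coeff (truncation a n) i = (if i \<le> n then a i else 0)"
proof -
  have "coeff (truncation a n) i = (\<Sum>j\<le>n. if j = i then a j else 0)"
    unfolding truncation_def coeff_sum coeff_monom by (intro sum.cong) auto
  also have "\<dots> = (if i \<le> n then a i else 0)" by (subst sum.delta) auto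
  finally show ?thesis .
qed

lemma poly_truncation: "poly (truncation a n) z = (\<Sum>i\<le>n. a i * z ^ i)"
  unfolding truncation_def poly_sum poly_monom by simp

lemma poly_truncation_partial_sum: "poly (truncation a n) z = partial_sum a z (Suc n)"
  unfolding poly_truncation partial_sum_def lessThan_Suc_atMost ..

lemma poly_truncation_0: "poly (truncation a n) 0 = a 0"
  unfolding poly_truncation by (subst sum.atMost_shift) (auto simp: power_0_left)

lemma truncation_nonzero: "a 0 \<noteq> 0 \<Longrightarrow> truncation a n \<noteq> 0"
  by (metis coeff_0 coeff_truncation zero_le)

lemma degree_truncation: "degree (truncation a n) \<le> n"
  by (rule degree_le) (auto simp: coeff_truncation)

lemma poly_truncation_Suc: "poly (truncation a (Suc n)) z = poly (truncation a n) z + a (Suc n) * z ^ Suc n"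
  unfolding poly_truncation by simp

lemma v_pow_diff: assumes "v x \<le> r" "v y \<le> r"
  shows "v (x ^ Suc i - y ^ Suc i) \<le> v (x - y) * r ^ i"
proof (induction i)
  case 0 thus ?case by simp
next
  case (Suc i)
  have r: "0 \<le> r" using assms v_nonneg[of x] by linarith
  have eq: "x ^ Suc (Suc i) - y ^ Suc (Suc i) = x * (x ^ Suc i - y ^ Suc i) + (x - y) * y ^ Suc i"
    by (simp add: algebra_simps)
  have 1: "v (x * (x ^ Suc i - y ^ Suc i)) \<le> v (x - y) * r ^ Suc i"
  proof -
    have "v (x * (x ^ Suc i - y ^ Suc i)) = v x * v (x ^ Suc i - y ^ Suc i)" by (simp add: v_mult)
    also have "\<dots> \<le> r * (v (x - y) * r ^ i)" using Suc assms r by (intro mult_mono) auto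
    finally show ?thesis by (simp add: algebra_simps)
  qed
  have 2: "v ((x - y) * y ^ Suc i) \<le> v (x - y) * r ^ Suc i"
  proof -
    have "v (y ^ Suc i) \<le> r ^ Suc i" unfolding v_power using assms by (intro power_mono) auto
    hence "v (x - y) * v (y ^ Suc i) \<le> v (x - y) * r ^ Suc i" by (intro mult_left_mono) auto
    thus ?thesis by (simp add: v_mult)
  qed
  show ?case unfolding eq using 1 2 by (rule v_add_le)
qed

end

locale nonarch_complete_field = nonarch_field v for v :: "'a::field \<Rightarrow> real" +
  assumes complete: "v_complete v" and acl: "alg_closed_field TYPE('a)"
begin

lemma coeffs_bounded_if_roots_large:
  assumes "p \<noteq> 0" "r > 0" "\<forall>x. poly p x = 0 \<longrightarrow> v x \<ge> r"
  shows "coeffs_bounded r p (v (poly p 0))"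
proof -
  obtain xs where xs: "p = smult (lead_coeff p) (\<Prod>x\<leftarrow>xs. [:-x, 1:])"
    using alg_closed_poly_splits[OF acl assms(1)] by blast
  have "\<forall>x\<in>set xs. v x \<ge> r" using assms(3) poly_prod_linear_root[OF xs] by blast
  hence "coeffs_bounded r (smult (lead_coeff p) (\<Prod>x\<leftarrow>xs. [:-x, 1:])) (v (lead_coeff p) * (\<Prod>x\<leftarrow>xs. v x))"
    using assms(2) by (intro coeffs_bounded_smult coeffs_bounded_prod)
  thus ?thesis using xs v_poly_0_split[OF xs] by simp
qed

lemma poly_lower_bound_away_from_roots:
  assumes "p \<noteq> 0" "degree p \<le> m" "v w \<le> r" "0 < dl" "dl \<le> r"
    "\<forall>x. poly p x = 0 \<longrightarrow> v (w - x) \<ge> dl"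
  shows "v (poly p 0) * (dl / r) ^ m \<le> v (poly p w)"
proof -
  obtain xs where len: "length xs = degree p" and xs: "p = smult (lead_coeff p) (\<Prod>x\<leftarrow>xs. [:-x, 1:])"
    using alg_closed_poly_splits[OF acl assms(1)] by blast
  have r: "r > 0" using assms by linarith
  have q: "0 < dl / r" "dl / r \<le> 1" using assms r by auto
  have each: "v x * (dl / r) \<le> v (w - x)" if "x \<in> set xs" for x
  proof (cases "v x > r")
    case True
    hence "v (w - x) = v x" using assms(3) by (metis v_minus_commute le_less_trans v_diff_dominant)
    moreover have "v x * (dl / r) \<le> v x * 1" using q by (intro mult_left_mono) auto
    ultimately show ?thesis by simp
  next
    case False
    have "v (w - x) \<ge> dl" using assms(6) poly_prod_linear_root[OF xs that] by blast
    moreover have "v x * (dl / r) \<le> dl" using False q r by (simp add: field_simps mult_right_mono)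
    ultimately show ?thesis by linarith
  qed
  have pw: "poly p w = lead_coeff p * (\<Prod>x\<leftarrow>xs. w - x)"
    by (subst xs) (simp only: poly_smult poly_prod_linear)
  have p0: "v (poly p 0) = v (lead_coeff p) * (\<Prod>x\<leftarrow>xs. v x)" by (rule v_poly_0_split[OF xs])
  have "(\<Prod>x\<leftarrow>xs. v x) * (dl / r) ^ m \<le> (\<Prod>x\<leftarrow>xs. v x) * (dl / r) ^ length xs"
    using q len assms(2) by (intro mult_left_mono power_decreasing prod_list_nonneg) auto
  also have "\<dots> = (\<Prod>x\<leftarrow>xs. v x * (dl / r))"
    by (induction xs) (auto simp: algebra_simps)
  also have "\<dots> \<le> (\<Prod>x\<leftarrow>xs. v (w - x))"
    using each q r assms(4) by (intro prod_list_mono_nonneg) (auto intro!: divide_nonneg_pos mult_nonneg_nonneg)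
  also have "\<dots> = v (\<Prod>x\<leftarrow>xs. w - x)" by (simp add: v_prod_list o_def)
  finally have "(\<Prod>x\<leftarrow>xs. v x) * (dl / r) ^ m \<le> v (\<Prod>x\<leftarrow>xs. w - x)" .
  hence "v (lead_coeff p) * ((\<Prod>x\<leftarrow>xs. v x) * (dl / r) ^ m) \<le> v (lead_coeff p) * v (\<Prod>x\<leftarrow>xs. w - x)"
    by (intro mult_left_mono) auto
  thus ?thesis unfolding p0 pw by (simp add: v_mult mult.assoc)
qed

lemma exists_nearest_root:
  fixes p :: "'a poly"
  assumes "p \<noteq> 0" "poly p x0 = 0"
  obtains b where "poly p b = 0" "\<And>x. poly p x = 0 \<Longrightarrow> v (w - b) \<le> v (w - x)"
proof -
  define D where "D = (\<lambda>x. v (w - x)) ` {x. poly p x = 0}"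
  have fin: "finite D" "D \<noteq> {}"
    using poly_roots_finite[OF assms(1)] assms(2) unfolding D_def by auto
  obtain b where "poly p b = 0" "v (w - b) = Min D"
    using Min_in[OF fin] unfolding D_def by auto
  thus ?thesis using that Min_le[OF fin(1)] unfolding D_def by auto
qed

lemma truncation_has_root:
  assumes "a k \<noteq> 0" "1 \<le> k" "k \<le> n"
  shows "\<exists>x. poly (truncation a n) x = 0"
proof -
  have "coeff (truncation a n) k \<noteq> 0" using assms by (simp add: coeff_truncation)
  hence "1 \<le> degree (truncation a n)" using assms(2) le_degree order_trans by blast
  thus ?thesis using acl unfolding alg_closed_field_def by blast
qed

lemma truncation_root_in_disc:
  assumes "a 0 \<noteq> 0" "r > 0" "k \<le> n" "v (a 0) < v (a k) * r ^ k"
  obtains z where "poly (truncation a n) z = 0" "v z \<le> r"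
proof -
  have "\<exists>z. poly (truncation a n) z = 0 \<and> v z \<le> r"
  proof (rule ccontr)
    assume "\<not> ?thesis"
    hence "coeffs_bounded r (truncation a n) (v (poly (truncation a n) 0))"
      using coeffs_bounded_if_roots_large[OF truncation_nonzero[of a, OF assms(1)] assms(2)] by force
    hence "v (a k) * r ^ k \<le> v (a 0)"
      using assms(3) unfolding coeffs_bounded_def poly_truncation_0 by (metis coeff_truncation)
    thus False using assms(4) by simp
  qed
  thus ?thesis using that by blast
qed

text \<open>At a root w of the truncation of degree n, the truncation of degree n + 1 is the single small
  term \<open>a\<^sub>n\<^sub>+\<^sub>1 w\<^sup>n\<^sup>+\<^sup>1\<close>; its factorization over its roots then forces a root close to w.\<close>

lemma truncation_root_step:
  assumes a0: "a 0 \<noteq> 0" and r: "r > 0"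
    and w: "poly (truncation a n) w = 0" "v w \<le> r"
    and root: "poly (truncation a (Suc n)) x0 = 0"
    and small: "v (a (Suc n)) * r ^ Suc n < v (a 0)"
  obtains b where "poly (truncation a (Suc n)) b = 0" "v b \<le> r"
    "v (a 0) * (v (w - b) / r) ^ Suc n \<le> v (a (Suc n)) * r ^ Suc n"
proof -
  let ?P = "truncation a (Suc n)"
  have Pnz: "?P \<noteq> 0" by (rule truncation_nonzero[of a, OF a0])
  obtain b where b: "poly ?P b = 0" and nearest: "\<And>x. poly ?P x = 0 \<Longrightarrow> v (w - b) \<le> v (w - x)"
    using exists_nearest_root[OF Pnz root] by blast
  have P0: "poly ?P 0 = a 0" by (rule poly_truncation_0)
  have "v (poly ?P w) = v (a (Suc n)) * v w ^ Suc n"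
    using w(1) by (simp add: poly_truncation_Suc v_mult v_power)
  also have "\<dots> \<le> v (a (Suc n)) * r ^ Suc n"
    using w(2) by (intro mult_left_mono power_mono) auto
  finally have Pw: "v (poly ?P w) \<le> v (a (Suc n)) * r ^ Suc n" .
  have deg: "degree ?P \<le> Suc n" by (rule degree_truncation)
  have close: "v (w - b) < r"
  proof (rule ccontr)
    assume "\<not> v (w - b) < r"
    hence "\<forall>x. poly ?P x = 0 \<longrightarrow> v (w - x) \<ge> r" using nearest by force
    hence "v (poly ?P 0) * (r / r) ^ Suc n \<le> v (poly ?P w)"
      using poly_lower_bound_away_from_roots[OF Pnz deg w(2) r order_refl] by blast
    thus False using Pw small r by (simp add: P0)
  qed
  have "v (a 0) * (v (w - b) / r) ^ Suc n \<le> v (a (Suc n)) * r ^ Suc n"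
  proof (cases "b = w")
    case False
    hence "v (poly ?P 0) * (v (w - b) / r) ^ Suc n \<le> v (poly ?P w)"
      using poly_lower_bound_away_from_roots[OF Pnz deg w(2) _ less_imp_le[OF close]] nearest by force
    thus ?thesis using Pw by (simp add: P0)
  qed (use r in simp)
  moreover have "v b \<le> r"
    using v_diff[of w "w - b"] w(2) close by simp
  ultimately show ?thesis using that b by blast
qed

lemma root_steps_tendsto_0:
  assumes decay: "coeffs_decay a" and a0: "a 0 \<noteq> 0" and r: "r > 0"
    and steps: "\<And>j. v (a 0) * (\<delta> j / r) ^ (m + j) \<le> v (a (m + j)) * r ^ (m + j)"
    and e: "e > 0"
  shows "\<exists>J. \<forall>j\<ge>J. \<delta> j < e"
proof -
  define e' where "e' = min e r"
  have e': "e' > 0" "e' \<le> e" unfolding e'_def using e r by auto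
  obtain J where J: "\<forall>n\<ge>J. v (a n) * (r * (r / e')) ^ n < v (a 0)"
    using decay r e' a0 unfolding coeffs_decay_def by (metis divide_pos_pos mult_pos_pos v_pos)
  have "\<delta> j < e'" if "j \<ge> J" for j
  proof (rule ccontr)
    assume "\<not> \<delta> j < e'"
    define n where "n = m + j"
    have "(e' / r) ^ n \<le> (\<delta> j / r) ^ n" using \<open>\<not> \<delta> j < e'\<close> e' r
      by (intro power_mono divide_right_mono) auto
    hence "v (a 0) * (e' / r) ^ n \<le> v (a n) * r ^ n"
      using steps[of j] unfolding n_def by (meson mult_left_mono v_nonneg order_trans)
    hence "v (a 0) * (e' / r) ^ n * (r / e') ^ n \<le> v (a n) * r ^ n * (r / e') ^ n"
      using e' r by (intro mult_right_mono) auto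
    hence "v (a 0) \<le> v (a n) * (r * (r / e')) ^ n"
      using e' r by (simp add: power_mult_distrib[symmetric] mult.assoc)
    moreover have "n \<ge> J" using that unfolding n_def by simp
    ultimately show False using J by fastforce
  qed
  thus ?thesis using e' by force
qed

lemma poly_truncation_diff_le:
  assumes r: "r > 0" and B: "\<And>i. v (a i) * r ^ i \<le> B" "0 \<le> B" and zw: "v z \<le> r" "v w \<le> r"
  shows "v (poly (truncation a n) z - poly (truncation a n) w) \<le> B * v (z - w) / r"
proof -
  have "poly (truncation a n) z - poly (truncation a n) w = (\<Sum>i\<le>n. a i * (z ^ i - w ^ i))"
    unfolding poly_truncation by (simp add: sum_subtractf right_diff_distrib)
  also have "v \<dots> \<le> B * v (z - w) / r"
  proof (rule v_sum_le)
    fix i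
    show "v (a i * (z ^ i - w ^ i)) \<le> B * v (z - w) / r"
    proof (cases i)
      case (Suc i')
      have "v (a i * (z ^ i - w ^ i)) \<le> v (a i) * (v (z - w) * r ^ i')"
        using v_pow_diff[OF zw] Suc by (simp add: v_mult mult_left_mono)
      also have "\<dots> = (v (a i) * r ^ i) * v (z - w) / r" using Suc r by (simp add: field_simps)
      also have "\<dots> \<le> B * v (z - w) / r"
        using B r by (intro divide_right_mono mult_right_mono) auto
      finally show ?thesis .
    qed (use B r in simp)
  qed (use B r in auto)
  finally show ?thesis .
qed

lemma limit_of_truncation_roots:
  assumes f: "has_series a f" and r: "r > 0"
    and roots: "\<And>j. poly (truncation a (m + j)) (zs j) = 0" "\<And>j. v (zs j) \<le> r"
    and lim: "v_tendsto v zs \<zeta>"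
  shows "f \<zeta> = 0"
proof -
  have "v \<zeta> \<le> r" by (rule v_tendsto_le[OF lim r roots(2)])
  obtain B where B: "B \<ge> 0" "\<And>i. v (a i) * r ^ i \<le> B"
    using coeffs_decay_bounded[OF has_series_coeffs_decay[OF f] r] by blast
  have "v (f \<zeta>) < e" if e: "e > 0" for e
  proof -
    obtain J1 where J1: "\<forall>j\<ge>J1. v (zs j - \<zeta>) < e * r / (B + 1)"
      using lim e r B unfolding v_tendsto_iff by (metis add_nonneg_pos divide_pos_pos mult_pos_pos zero_less_one)
    obtain J2 where J2: "\<forall>n\<ge>J2. v (partial_sum a \<zeta> n - f \<zeta>) < e"
      using f e unfolding has_series_def v_tendsto_iff by blast
    define j where "j = J1 + J2"
    define n where "n = m + j"
    have 1: "v (partial_sum a \<zeta> (Suc n) - f \<zeta>) < e" using J2 unfolding n_def j_def by auto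
    have "v (poly (truncation a n) \<zeta> - poly (truncation a n) (zs j)) \<le> B * v (\<zeta> - zs j) / r"
      using poly_truncation_diff_le[OF r B(2,1) \<open>v \<zeta> \<le> r\<close> roots(2)] by blast
    also have "\<dots> < e"
    proof -
        have "v (\<zeta> - zs j) < e * r / (B + 1)" using J1 v_minus_commute unfolding j_def by (metis le_add1)
      hence "B * v (\<zeta> - zs j) \<le> B * (e * r / (B + 1))" using B by (intro mult_left_mono) auto
      also have "\<dots> < e * r" using B e r by (simp add: field_simps)
      finally show ?thesis using r by (simp add: field_simps)
    qed
    finally have 2: "v (poly (truncation a n) \<zeta> - poly (truncation a n) (zs j)) < e" .
    have "f \<zeta> = (poly (truncation a n) \<zeta> - poly (truncation a n) (zs j)) - (partial_sum a \<zeta> (Suc n) - f \<zeta>)"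
      using roots(1)[of j] unfolding n_def poly_truncation_partial_sum by simp
    thus ?thesis using 1 2 by (metis v_diff le_less_trans max_less_iff_conj)
  qed
  thus ?thesis by (metis less_irrefl v_pos)
qed

lemma has_series_zero_free_coeffs:
  assumes f: "has_series a f" and nz: "\<forall>z. f z \<noteq> 0" and k: "k \<ge> 1"
  shows "a k = 0"
proof (rule ccontr)
  assume ak: "a k \<noteq> 0"
  have decay: "coeffs_decay a" by (rule has_series_coeffs_decay[OF f])
  have a0: "a 0 \<noteq> 0" using has_series_at_0[OF f] nz by metis
  obtain r where r: "r \<ge> 1" "v (a 0) < v (a k) * r ^ k"
    using exists_power_gt[of "v (a k)" k "v (a 0)"] ak k by auto
  have r0: "r > 0" using r by linarith
  obtain N where N: "\<forall>n\<ge>N. v (a n) * r ^ n < v (a 0)"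
    using decay r0 a0 unfolding coeffs_decay_def by (metis v_pos)
  define n1 where "n1 = max N k"
  have "k \<le> n1" unfolding n1_def by simp
  then obtain z0 where z0: "poly (truncation a n1) z0 = 0" "v z0 \<le> r"
    using truncation_root_in_disc[OF a0 r0 _ r(2)] by blast
  define good where "good n w b \<longleftrightarrow> poly (truncation a (Suc n)) b = 0 \<and> v b \<le> r \<and>
      v (a 0) * (v (w - b) / r) ^ Suc n \<le> v (a (Suc n)) * r ^ Suc n" for n w b
  have step: "\<exists>b. good n w b" if "n \<ge> n1" "poly (truncation a n) w = 0" "v w \<le> r" for n w
  proof -
    have "k \<le> Suc n" using that(1) unfolding n1_def by simp
    then obtain x0 where x0: "poly (truncation a (Suc n)) x0 = 0"
      using truncation_has_root[of a k, OF ak k] by blast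
    have "v (a (Suc n)) * r ^ Suc n < v (a 0)" using N[rule_format, of "Suc n"] that(1) unfolding n1_def by simp
    from truncation_root_step[OF a0 r0 that(2,3) x0 this] show ?thesis unfolding good_def by blast
  qed
  define zs where "zs = rec_nat z0 (\<lambda>j w. SOME b. good (n1 + j) w b)"
  have zs_Suc: "zs (Suc j) = (SOME b. good (n1 + j) (zs j) b)" for j unfolding zs_def by simp
  have next_good: "good (n1 + j) (zs j) (zs (Suc j))"
    if "poly (truncation a (n1 + j)) (zs j) = 0" "v (zs j) \<le> r" for j
  proof -
    have "\<exists>b. good (n1 + j) (zs j) b" using that by (intro step) auto
    from someI_ex[OF this] show ?thesis unfolding zs_Suc .
  qed
  have inv: "poly (truncation a (n1 + j)) (zs j) = 0 \<and> v (zs j) \<le> r" for j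
  proof (induction j)
    case (Suc j)
    thus ?case using next_good[of j] unfolding good_def by simp
  qed (use z0 zs_def in simp)
  have steps: "v (a 0) * (v (zs j - zs (Suc j)) / r) ^ (Suc n1 + j) \<le> v (a (Suc n1 + j)) * r ^ (Suc n1 + j)" for j
    using next_good[of j] inv[of j] unfolding good_def by simp
  have "v_cauchy v zs"
    using root_steps_tendsto_0[OF decay a0 r0 steps] by (intro v_cauchy_if_steps_small) blast
  then obtain \<zeta> where "v_tendsto v zs \<zeta>" using complete unfolding v_complete_def by blast
  hence "f \<zeta> = 0" using limit_of_truncation_roots[OF f r0] inv by blast
  thus False using nz by blast
qed

lemma entire_zero_free_const:
  assumes "entire v f" "\<forall>z. f z \<noteq> 0" shows "\<exists>c. \<forall>z. f z = c"
proof -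
  obtain a where a: "has_series a f" using assms unfolding entire_iff_has_series by blast
  show ?thesis using has_series_const_coeffs[OF a] has_series_zero_free_coeffs[OF a assms(2)] by blast
qed

lemma entire_const_if_poly_const:
  assumes s: "entire v s" and p: "p \<noteq> [:l:]" and eq: "\<And>z. poly p (s z) = l"
  shows "\<exists>k. \<forall>z. s z = k"
proof -
  have "finite {y. poly (p - [:l:]) y = 0}" using p by (intro poly_roots_finite) simp
  hence "{y. poly (p - [:l:]) y = 0} \<noteq> UNIV" using alg_closed_field_infinite[OF acl] by auto
  then obtain y0 where y0: "poly p y0 \<noteq> l" by auto
  have "\<forall>z. s z - y0 \<noteq> 0" using eq y0 by (metis eq_iff_diff_eq_0)
  then obtain k where "\<forall>z. s z - y0 = k" using entire_zero_free_const[OF entire_diff[OF s entire_const]] by blast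
  thus ?thesis by (metis diff_add_cancel)
qed

end

lemma pdot_triple[simp]: "pdot (x0, x1, x2) (y0, y1, y2) = x0 * y0 + x1 * y1 + x2 * y2"
  by (simp add: pdot_def)

lemma padd_triple[simp]: "padd (x0, x1, x2) (y0, y1, y2) = (x0 + y0, x1 + y1, x2 + y2)"
  by (simp add: padd_def)

lemma pscale_triple[simp]: "pscale s (x0, x1, x2) = (s * x0, s * x1, s * x2)"
  by (simp add: pscale_def)

lemma pdot_padd: "pdot g (padd x y) = pdot g x + pdot g y"
  by (cases g; cases x; cases y) (simp add: algebra_simps)

lemma pdot_pscale: "pdot g (pscale s x) = s * pdot g x"
  by (cases g; cases x) (simp add: algebra_simps)

lemma padd_pdot: "pdot (padd x y) g = pdot x g + pdot y g"
  by (cases g; cases x; cases y) (simp add: algebra_simps)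

lemma pscale_pdot: "pdot (pscale s x) g = s * pdot x g"
  by (cases g; cases x) (simp add: algebra_simps)

lemma pscale_0[simp]: "pscale 0 p = (0, 0, 0)" by (cases p) simp

lemma pscale_one[simp]: "pscale 1 p = p" by (cases p) simp

lemma padd_0[simp]: "padd p (0, 0, 0) = p" "padd (0, 0, 0) p = p" by (cases p; simp)+

lemma monomial3_scale: fixes cc s x0 x1 x2 :: "'a::comm_ring_1" assumes "i \<le> d" "j \<le> d - i"
  shows "cc * (s * x0) ^ i * (s * x1) ^ j * (s * x2) ^ (d - i - j) = s ^ d * (cc * x0 ^ i * x1 ^ j * x2 ^ (d - i - j))"
proof -
  have e: "i + j + (d - i - j) = d" using assms by simp
  have "s ^ (i + j + (d - i - j)) = s ^ i * s ^ j * s ^ (d - i - j)" by (simp only: power_add)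
  hence "s ^ d = s ^ i * s ^ j * s ^ (d - i - j)" unfolding e .
  thus ?thesis by (simp add: power_mult_distrib algebra_simps)
qed

lemma hp_eval_scale: "hp_eval d c (pscale s p) = s ^ d * hp_eval d c p"
proof (cases p)
  case (fields x0 x1 x2)
  have "hp_eval d c (pscale s p) = (\<Sum>i\<le>d. \<Sum>j\<le>d-i. s ^ d * (c i j * x0 ^ i * x1 ^ j * x2 ^ (d-i-j)))"
    unfolding fields hp_eval_def pscale_def prod.case fst_conv snd_conv
    by (intro sum.cong refl monomial3_scale) auto
  also have "\<dots> = s ^ d * hp_eval d c p" unfolding fields hp_eval_def by (simp add: sum_distrib_left)
  finally show ?thesis .
qed

lemma hp_eval_origin: "d \<ge> 1 \<Longrightarrow> hp_eval d c (0, 0, 0) = (0::'a::field)"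
  using hp_eval_scale[of d c 0 "(0,0,0)"] by (simp add: power_0_left)

section \<open>Restricting a form to a line\<close>

lemma coeff_mult_1: "coeff (p * q) 1 = coeff p 0 * coeff q 1 + coeff p 1 * coeff q 0"
  unfolding coeff_mult by (simp add: atMost_Suc add.commute)

lemma coeff_0_linear_power: "coeff ([:a, b:] ^ i) 0 = a ^ i"
  by (induction i) (auto simp: coeff_mult_0)

lemma coeff_1_linear_power: "coeff ([:a, b:] ^ i) 1 = of_nat i * a ^ (i - 1) * (b :: 'a :: comm_ring_1)"
proof (induction i)
  case 0 thus ?case by simp
next
  case (Suc i)
  have "coeff ([:a, b:] ^ Suc i) 1 = a * coeff ([:a, b:] ^ i) 1 + b * coeff ([:a, b:] ^ i) 0"
    by (simp only: power_Suc coeff_mult_1) simp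
  also have "\<dots> = a * (of_nat i * a ^ (i - 1) * b) + b * a ^ i" using Suc by (simp add: coeff_0_linear_power)
  also have "\<dots> = of_nat (Suc i) * a ^ (Suc i - 1) * b"
  proof (cases i)
    case 0 thus ?thesis by simp
  next
    case (Suc i') thus ?thesis by (simp add: algebra_simps)
  qed
  finally show ?case .
qed

lemma degree_linear_power_le: "degree ([:a, b:] ^ i) \<le> i"
  using degree_power_le[of "[:a, b:]" i] by (simp add: order_trans)

lemma coeff_mult_top:
  assumes "degree p \<le> m" "degree q \<le> n"
  shows "coeff (p * q) (m + n) = coeff p m * coeff q n"
proof -
  have "coeff (p * q) (m + n) = (\<Sum>i\<le>m + n. if i = m then coeff p m * coeff q n else 0)"
    unfolding coeff_mult
  proof (intro sum.cong refl)
    fix i assume "i \<in> {..m + n}"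
    show "coeff p i * coeff q (m + n - i) = (if i = m then coeff p m * coeff q n else 0)"
    proof (cases "i < m")
      case True
      hence "coeff q (m + n - i) = 0" using assms(2) by (intro coeff_eq_0) auto
      thus ?thesis using True by simp
    next
      case False
      show ?thesis
      proof (cases "i = m")
        case False
        hence "coeff p i = 0" using \<open>\<not> i < m\<close> assms(1) by (intro coeff_eq_0) auto
        thus ?thesis using False by simp
      qed simp
    qed
  qed
  also have "\<dots> = coeff p m * coeff q n" by (subst sum.delta) auto
  finally show ?thesis .
qed

lemma coeff_top_linear_power: "coeff ([:a, b:] ^ i) i = b ^ i"
proof (induction i)
  case 0 thus ?case by simp
next
  case (Suc i)
  have "coeff ([:a, b:] * [:a, b:] ^ i) (1 + i) = coeff [:a, b:] 1 * coeff ([:a, b:] ^ i) i"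
    by (rule coeff_mult_top) (auto intro: degree_linear_power_le)
  thus ?case using Suc by simp
qed

definition line_poly :: "nat \<Rightarrow> (nat \<Rightarrow> nat \<Rightarrow> 'a::field) \<Rightarrow> 'a pt \<Rightarrow> 'a pt \<Rightarrow> 'a poly" where
  "line_poly d c P Q = (\<Sum>i\<le>d. \<Sum>j\<le>d-i. smult (c i j)
     ([:fst P, fst Q:] ^ i * [:fst (snd P), fst (snd Q):] ^ j * [:snd (snd P), snd (snd Q):] ^ (d-i-j)))"

lemma poly_line_poly: "poly (line_poly d c P Q) y = hp_eval d c (padd P (pscale y Q))"
  by (cases P; cases Q) (simp add: line_poly_def hp_eval_def padd_def pscale_def poly_sum algebra_simps)

lemma degree_line_poly: "degree (line_poly d c P Q) \<le> d"
proof (rule degree_le, intro allI impI)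
  fix n assume n: "d < n"
  show "coeff (line_poly d c P Q) n = 0"
    unfolding line_poly_def coeff_sum coeff_smult
  proof (intro sum.neutral ballI)
    fix i j assume i: "i \<in> {..d}" and j: "j \<in> {..d - i}"
    let ?A = "[:fst P, fst Q:] ^ i" and ?B = "[:fst (snd P), fst (snd Q):] ^ j"
      and ?C = "[:snd (snd P), snd (snd Q):] ^ (d-i-j)"
    have "degree (?A * ?B * ?C) \<le> i + j + (d - i - j)"
      using degree_linear_power_le by (intro order_trans[OF degree_mult_le] add_mono) auto
    also have "\<dots> = d" using i j by simp
    finally show "c i j * coeff (?A * ?B * ?C) n = 0" using n by (simp add: coeff_eq_0)
  qed
qed

lemma coeff_top_monomial3:
  fixes cc :: "'a::comm_ring_1"
  assumes "i + j + k = d"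
  shows "coeff (smult cc ([:p0, q0:] ^ i * [:p1, q1:] ^ j * [:p2, q2:] ^ k)) d = cc * q0 ^ i * q1 ^ j * q2 ^ k"
proof -
  have "coeff ([:p0, q0:] ^ i * [:p1, q1:] ^ j * [:p2, q2:] ^ k) ((i + j) + k)
      = coeff ([:p0, q0:] ^ i * [:p1, q1:] ^ j) (i + j) * coeff ([:p2, q2:] ^ k) k"
    by (rule coeff_mult_top) (auto intro: order_trans[OF degree_mult_le] add_mono degree_linear_power_le)
  also have "coeff ([:p0, q0:] ^ i * [:p1, q1:] ^ j) (i + j) = q0 ^ i * q1 ^ j"
    by (subst coeff_mult_top) (auto intro: degree_linear_power_le simp: coeff_top_linear_power)
  finally show ?thesis using assms by (simp add: coeff_top_linear_power mult.assoc)
qed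

lemma coeff_line_poly_top: "coeff (line_poly d c P Q) d = hp_eval d c Q"
proof (cases Q)
  case (fields q0 q1 q2)
  show ?thesis unfolding line_poly_def coeff_sum fields hp_eval_def prod.case fst_conv snd_conv
    by (intro sum.cong refl coeff_top_monomial3) auto
qed

lemma coeff_1_monomial3: "coeff (smult (cc::'a::comm_ring_1) ([:p0, q0:] ^ i * [:p1, q1:] ^ j * [:p2, q2:] ^ k)) 1 =
   cc * of_nat i * p0 ^ (i - 1) * p1 ^ j * p2 ^ k * q0 +
   cc * p0 ^ i * of_nat j * p1 ^ (j - 1) * p2 ^ k * q1 +
   cc * p0 ^ i * p1 ^ j * of_nat k * p2 ^ (k - 1) * q2"
  by (simp only: coeff_smult coeff_mult_1 coeff_mult_0 coeff_0_linear_power coeff_1_linear_power) (simp add: algebra_simps)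

lemma coeff_line_poly_1: "coeff (line_poly d c P Q) 1 = pdot (hp_grad d c P) Q"
proof (cases P; cases Q)
  fix p0 p1 p2 q0 q1 q2 assume P: "P = (p0, p1, p2)" and Q: "Q = (q0, q1, q2)"
  have "coeff (line_poly d c P Q) 1 = (\<Sum>i\<le>d. \<Sum>j\<le>d-i.
      c i j * of_nat i * p0 ^ (i - 1) * p1 ^ j * p2 ^ (d - i - j) * q0
    + c i j * p0 ^ i * of_nat j * p1 ^ (j - 1) * p2 ^ (d - i - j) * q1
    + c i j * p0 ^ i * p1 ^ j * of_nat (d - i - j) * p2 ^ (d - i - j - 1) * q2)"
    unfolding line_poly_def coeff_sum P Q fst_conv snd_conv coeff_1_monomial3 ..
  also have "\<dots> = pdot (hp_grad d c P) Q"
    unfolding P Q pdot_def hp_grad_def hp_d0_def hp_d1_def hp_d2_def prod.case fst_conv snd_conv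
    by (simp only: sum_distrib_right sum.distrib)
  finally show ?thesis .
qed

lemma grad_dot_zero_if_line_in_curve:
  fixes P Q :: "'a::field pt"
  assumes "infinite (UNIV :: 'a set)" "\<And>y. hp_eval d c (padd P (pscale y Q)) = 0"
  shows "pdot (hp_grad d c P) Q = 0"
proof -
  have "line_poly d c P Q = 0"
    by (rule poly_eqI_infinite[OF assms(1)]) (simp add: poly_line_poly assms(2))
  thus ?thesis using coeff_line_poly_1[of d c P Q] by simp
qed

lemma euler_grad_dot_self:
  fixes P :: "'a::field pt"
  assumes "infinite (UNIV :: 'a set)" "hp_eval d c P = 0"
  shows "pdot (hp_grad d c P) P = 0"
proof (rule grad_dot_zero_if_line_in_curve[OF assms(1)])
  fix y
  have "padd P (pscale y P) = pscale (1 + y) P" by (cases P) (simp add: padd_def pscale_def algebra_simps)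
  thus "hp_eval d c (padd P (pscale y P)) = 0" using assms(2) by (simp add: hp_eval_scale)
qed

section \<open>Frames adapted to a line\<close>

text \<open>(u, w, e) is a basis of the coordinate space with dual basis (S, T, a); u and w span the plane
  of the line L = {a \<cdot> x = 0}.\<close>

definition line_frame :: "'a::field pt \<Rightarrow> 'a pt \<Rightarrow> 'a pt \<Rightarrow> 'a pt \<Rightarrow> 'a pt \<Rightarrow> 'a pt \<Rightarrow> bool" where
  "line_frame a u w e S T \<longleftrightarrow> pdot a u = 0 \<and> pdot a w = 0 \<and> pdot a e = 1 \<and> pdot S u = 1 \<and> pdot S w = 0 \<and>
     pdot T u = 0 \<and> pdot T w = 1 \<and>
     (\<forall>p. p = padd (padd (pscale (pdot S p) u) (pscale (pdot T p) w)) (pscale (pdot a p) e))"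

lemma line_frame_dots: "line_frame a u w e S T \<Longrightarrow> pdot a u = 0 \<and> pdot a w = 0 \<and> pdot a e = 1 \<and> pdot S u = 1 \<and>
   pdot S w = 0 \<and> pdot T u = 0 \<and> pdot T w = 1"
  unfolding line_frame_def by blast

lemma line_frame_decomp: "line_frame a u w e S T \<Longrightarrow> p = padd (padd (pscale (pdot S p) u) (pscale (pdot T p) w)) (pscale (pdot a p) e)"
  unfolding line_frame_def by blast

lemma line_frame_exists:
  fixes a :: "'a::field pt"
  assumes "a \<noteq> (0, 0, 0)" shows "\<exists>u w e S T. line_frame a u w e S T"
proof (cases a)
  case (fields a0 a1 a2)
  show ?thesis
  proof (cases "a0 \<noteq> 0")
    case True
    have "line_frame a (-a1/a0, 1, 0) (-a2/a0, 0, 1) (1/a0, 0, 0) (0, 1, 0) (0, 0, 1)"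
      unfolding line_frame_def fields using True by (auto simp: field_simps)
    thus ?thesis by blast
  next
    case F0: False
    show ?thesis
    proof (cases "a1 \<noteq> 0")
      case True
      have "line_frame a (1, -a0/a1, 0) (0, -a2/a1, 1) (0, 1/a1, 0) (1, 0, 0) (0, 0, 1)"
        unfolding line_frame_def fields using True F0 by (auto simp: field_simps)
      thus ?thesis by blast
    next
      case F1: False
      hence T: "a2 \<noteq> 0" using assms F0 fields by auto
      have "line_frame a (1, 0, -a0/a2) (0, 1, -a1/a2) (0, 0, 1/a2) (1, 0, 0) (0, 1, 0)"
        unfolding line_frame_def fields using T F0 F1 by (auto simp: field_simps)
      thus ?thesis by blast
    qed
  qed
qed

lemma line_frame_decomp_on_line:
  assumes "line_frame a u w e S T" "pdot a q = 0"
  shows "q = padd (pscale (pdot S q) u) (pscale (pdot T q) w)"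
proof -
  have "q = padd (padd (pscale (pdot S q) u) (pscale (pdot T q) w)) (pscale (pdot a q) e)"
    by (rule line_frame_decomp[OF assms(1)])
  thus ?thesis using assms(2) by (cases q; cases u; cases w; cases e) simp
qed

lemma line_frame_swap:
  assumes "line_frame a u w e S T" shows "line_frame a w u e T S"
proof -
  have "padd (pscale (pdot T p) w) (pscale (pdot S p) u) = padd (pscale (pdot S p) u) (pscale (pdot T p) w)" for p
    by (cases u; cases w) (simp add: add.commute)
  thus ?thesis using assms unfolding line_frame_def by simp
qed

lemma line_frame_replace:
  assumes b: "line_frame a u w e S T" and t0: "t0 \<noteq> 0" and w': "w' = padd (pscale s0 u) (pscale t0 w)"
  shows "\<exists>S' T'. line_frame a u w' e S' T'"
proof -
  define S' where "S' = padd S (pscale (- s0 / t0) T)"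
  define T' where "T' = pscale (1 / t0) T"
  have recombine: "padd (pscale (al + - (s0 / t0) * be) u) (pscale (1 / t0 * be) (padd (pscale s0 u) (pscale t0 w)))
     = padd (pscale al u) (pscale be w)" for al be
    using t0 by (cases u; cases w) (simp add: field_simps)
  have "line_frame a u w' e S' T'"
    unfolding line_frame_def
  proof (intro conjI allI)
    show "pdot a u = 0" "pdot a w' = 0" "pdot a e = 1"
      using line_frame_dots[OF b] unfolding w' by (auto simp: pdot_padd pdot_pscale)
    show "pdot S' u = 1" "pdot S' w' = 0" "pdot T' u = 0" "pdot T' w' = 1"
      using line_frame_dots[OF b] t0 unfolding S'_def T'_def w'
      by (auto simp: pdot_padd pdot_pscale padd_pdot pscale_pdot field_simps)
    fix p
    have "p = padd (padd (pscale (pdot S p) u) (pscale (pdot T p) w)) (pscale (pdot a p) e)"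
      by (rule line_frame_decomp[OF b])
    also have "\<dots> = padd (padd (pscale (pdot S' p) u) (pscale (pdot T' p) w')) (pscale (pdot a p) e)"
      unfolding S'_def T'_def w' padd_pdot pscale_pdot using recombine by simp
    finally show "p = padd (padd (pscale (pdot S' p) u) (pscale (pdot T' p) w')) (pscale (pdot a p) e)" .
  qed
  thus ?thesis by blast
qed

lemma line_frame_change:
  assumes b: "line_frame a u w e S T" and w': "pdot a w' = 0" "w' \<noteq> (0, 0, 0)"
  shows "\<exists>u' S' T'. line_frame a u' w' e S' T'"
proof -
  have w'eq: "w' = padd (pscale (pdot S w') u) (pscale (pdot T w') w)"
    by (rule line_frame_decomp_on_line[OF b w'(1)])
  show ?thesis
  proof (cases "pdot T w' = 0")
    case False
    thus ?thesis using line_frame_replace[OF b False w'eq] by blast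
  next
    case True
    hence "pdot S w' \<noteq> 0" using w' w'eq by (cases u; cases w) auto
    moreover have "w' = padd (pscale 0 w) (pscale (pdot S w') u)" using w'eq True by (cases u; cases w) simp
    ultimately show ?thesis using line_frame_replace[OF line_frame_swap[OF b]] by blast
  qed
qed

lemma line_frame_normal:
  assumes b: "line_frame a u w e S T" and "pdot g u = 0" "pdot g w = 0"
  shows "g = pscale (pdot g e) a"
proof -
  have dec: "\<forall>p. p = padd (padd (pscale (pdot S p) u) (pscale (pdot T p) w)) (pscale (pdot a p) e)"
    by (intro allI) (rule line_frame_decomp[OF b])
  have lin: "pdot g p = pdot g e * pdot a p" for p
  proof -
    have "pdot g p = pdot g (padd (padd (pscale (pdot S p) u) (pscale (pdot T p) w)) (pscale (pdot a p) e))"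
      using arg_cong[OF dec[rule_format, of p], of "pdot g"] .
    also have "\<dots> = pdot g e * pdot a p" using assms by (simp add: pdot_padd pdot_pscale)
    finally show ?thesis .
  qed
  define k where "k = pdot g e"
  have lin': "pdot g p = k * pdot a p" for p unfolding k_def by (rule lin)
  obtain g0 g1 g2 where g: "g = (g0, g1, g2)" by (cases g)
  obtain a0 a1 a2 where a: "a = (a0, a1, a2)" by (cases a)
  have "g0 = k * a0" using lin'[of "(1,0,0)"] unfolding g a by simp
  moreover have "g1 = k * a1" using lin'[of "(0,1,0)"] unfolding g a by simp
  moreover have "g2 = k * a2" using lin'[of "(0,0,1)"] unfolding g a by simp
  ultimately have "g = pscale k a" unfolding g a by simp
  thus ?thesis unfolding k_def .
qed

lemma line_frame_point_nonzero:
  assumes "line_frame a u w e S T"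
  shows "padd u (pscale x w) \<noteq> (0, 0, 0)"
proof
  assume h: "padd u (pscale x w) = (0, 0, 0)"
  have "pdot S (padd u (pscale x w)) = 1" using line_frame_dots[OF assms] by (simp add: pdot_padd pdot_pscale)
  thus False unfolding h by (cases S) simp
qed

lemma line_frame_on_line: "line_frame a u w e S T \<Longrightarrow> pdot a (padd (pscale s u) (pscale t w)) = 0"
  by (drule line_frame_dots) (simp add: pdot_padd pdot_pscale)

lemma grad_not_normal_at_intersection:
  fixes c :: "nat \<Rightarrow> nat \<Rightarrow> 'a::field" and a :: "'a pt"
  assumes ns: "nonsingular_curve d c" and tr: "transversal d c a" and b: "line_frame a u w e S T"
    and P: "P \<noteq> (0, 0, 0)" "hp_eval d c P = 0" "pdot a P = 0"
    and g: "pdot (hp_grad d c P) u = 0" "pdot (hp_grad d c P) w = 0"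
  shows False
proof -
  define k where "k = pdot (hp_grad d c P) e"
  have gk: "hp_grad d c P = pscale k a" unfolding k_def by (rule line_frame_normal[OF b g])
  show False
  proof (cases "k = 0")
    case True
    hence "hp_grad d c P = (0, 0, 0)" using gk by simp
    thus False using ns P unfolding nonsingular_curve_def by blast
  next
    case False
    hence "proportional a (hp_grad d c P)" unfolding proportional_def using gk by blast
    thus False using tr P unfolding transversal_def by blast
  qed
qed

lemma exists_point_on_line_off_curve:
  fixes c :: "nat \<Rightarrow> nat \<Rightarrow> 'a::field" and a :: "'a pt"
  assumes inf: "infinite (UNIV :: 'a set)" and ns: "nonsingular_curve d c" and tr: "transversal d c a"
    and b: "line_frame a u w e S T"
  shows "\<exists>w'. pdot a w' = 0 \<and> hp_eval d c w' \<noteq> 0"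
proof (rule ccontr)
  assume "\<not> ?thesis"
  hence Z: "\<And>q. pdot a q = 0 \<Longrightarrow> hp_eval d c q = 0" by blast
  have bd: "pdot a u = 0" "pdot a w = 0" using line_frame_dots[OF b] by auto
  have u0: "u \<noteq> (0, 0, 0)" using line_frame_point_nonzero[OF b, of 0] by simp
  have "pdot (hp_grad d c u) Q = 0" if "pdot a Q = 0" for Q
    by (rule grad_dot_zero_if_line_in_curve[OF inf], rule Z) (simp add: pdot_padd pdot_pscale bd that)
  hence "pdot (hp_grad d c u) u = 0" "pdot (hp_grad d c u) w = 0" using bd by auto
  thus False using grad_not_normal_at_intersection[OF ns tr b u0 Z[OF bd(1)] bd(1)] by blast
qed

lemma grad_dot_zero_at_double_root:
  fixes u w :: "'a::field pt"
  assumes inf: "infinite (UNIV :: 'a set)" and "line_poly d c u w = [:-y, 1:] * [:-y, 1:] * R"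
  shows "pdot (hp_grad d c (padd u (pscale y w))) w = 0"
proof -
  have "line_poly d c (padd u (pscale y w)) w = monom 1 2 * pcompose R [:y, 1:]"
  proof (rule poly_eqI_infinite[OF inf])
    fix t
    have "padd (padd u (pscale y w)) (pscale t w) = padd u (pscale (y + t) w)"
      by (cases u; cases w) (simp add: algebra_simps)
    hence "poly (line_poly d c (padd u (pscale y w)) w) t = poly (line_poly d c u w) (y + t)"
      by (simp add: poly_line_poly)
    also have "\<dots> = poly (monom 1 2 * pcompose R [:y, 1:]) t"
      by (simp add: assms(2) poly_monom poly_pcompose power2_eq_square algebra_simps)
    finally show "poly (line_poly d c (padd u (pscale y w)) w) t = poly (monom 1 2 * pcompose R [:y, 1:]) t" .
  qed
  hence "coeff (line_poly d c (padd u (pscale y w)) w) 1 = 0" by (simp add: coeff_monom_mult)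
  thus ?thesis by (simp only: coeff_line_poly_1)
qed

lemma hp_eval_plane_prod:
  fixes u w :: "'a::field pt"
  assumes "line_poly d c u w = smult (hp_eval d c w) (\<Prod>x\<leftarrow>xs. [:-x, 1:])" "length xs = d"
  shows "hp_eval d c (padd (pscale s u) (pscale t w)) = hp_eval d c w * (\<Prod>x\<leftarrow>xs. t - x * s)"
proof (cases "s = 0")
  case True
  have "hp_eval d c (padd (pscale s u) (pscale t w)) = t ^ d * hp_eval d c w"
    using True by (simp add: hp_eval_scale)
  thus ?thesis using True assms(2) by (simp add: prod_list_const)
next
  case False
  have "padd (pscale s u) (pscale t w) = pscale s (padd u (pscale (t / s) w))"
    using False by (cases u; cases w) (simp add: field_simps)
  hence "hp_eval d c (padd (pscale s u) (pscale t w)) = s ^ d * poly (line_poly d c u w) (t / s)"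
    by (simp add: hp_eval_scale poly_line_poly)
  also have "\<dots> = hp_eval d c w * (s ^ length xs * (\<Prod>x\<leftarrow>xs. t / s - x))"
    using assms by (simp only: poly_smult poly_prod_linear) simp
  also have "s ^ length xs * (\<Prod>x\<leftarrow>xs. t / s - x) = (\<Prod>x\<leftarrow>xs. s * (t / s - x))"
    by (rule prod_list_scale[symmetric])
  also have "\<dots> = (\<Prod>x\<leftarrow>xs. t - x * s)"
    using False by (intro arg_cong[where f = prod_list] map_cong) (auto simp: field_simps)
  finally show ?thesis .
qed

lemma curve_on_line_splits:
  fixes c :: "nat \<Rightarrow> nat \<Rightarrow> 'a::field" and a :: "'a pt"
  assumes acl: "alg_closed_field TYPE('a)" and d: "d \<ge> 1" and ns: "nonsingular_curve d c"
    and a0: "a \<noteq> (0, 0, 0)" and tr: "transversal d c a"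
  shows "\<exists>u w e S T xs. line_frame a u w e S T \<and> hp_eval d c w \<noteq> 0 \<and> length xs = d \<and> distinct xs \<and>
     (\<forall>x\<in>set xs. hp_eval d c (padd u (pscale x w)) = 0) \<and>
     (\<forall>s t. hp_eval d c (padd (pscale s u) (pscale t w)) = hp_eval d c w * (\<Prod>x\<leftarrow>xs. t - x * s))"
proof -
  have inf: "infinite (UNIV :: 'a set)" by (rule alg_closed_field_infinite[OF acl])
  obtain u0 w0 e S0 T0 where b0: "line_frame a u0 w0 e S0 T0" using line_frame_exists[OF a0] by blast
  obtain w where w: "pdot a w = 0" "hp_eval d c w \<noteq> 0"
    using exists_point_on_line_off_curve[OF inf ns tr b0] by blast
  have "w \<noteq> (0, 0, 0)" using w hp_eval_origin[of d c] d by auto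
  then obtain u S T where b: "line_frame a u w e S T" using line_frame_change[OF b0 w(1)] by blast
  define Phi where "Phi = line_poly d c u w"
  have "coeff Phi d = hp_eval d c w" unfolding Phi_def by (rule coeff_line_poly_top)
  moreover have "degree Phi \<le> d" unfolding Phi_def by (rule degree_line_poly)
  ultimately have Phinz: "Phi \<noteq> 0" and lc: "lead_coeff Phi = hp_eval d c w" and degd: "degree Phi = d"
    using w(2) le_degree[of Phi d] by auto
  obtain xs where len: "length xs = d" and xs: "Phi = smult (hp_eval d c w) (\<Prod>x\<leftarrow>xs. [:-x, 1:])"
    using alg_closed_poly_splits[OF acl Phinz] degd lc by auto
  have roots: "\<forall>x\<in>set xs. hp_eval d c (padd u (pscale x w)) = 0"
    using poly_prod_linear_root[OF xs] by (auto simp: Phi_def poly_line_poly)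
  have dist: "distinct xs"
  proof (rule ccontr)
    assume "\<not> distinct xs"
    then obtain ys y zs ws where dec: "xs = ys @ [y] @ zs @ [y] @ ws" using not_distinct_decomp by blast
    define R where "R = smult (hp_eval d c w) (\<Prod>x\<leftarrow>ys @ zs @ ws. [:-x, 1:])"
    have "(\<Prod>x\<leftarrow>xs. [:-x, 1:]) = [:-y, 1:] * [:-y, 1:] * (\<Prod>x\<leftarrow>ys @ zs @ ws. [:-x, 1:])"
      unfolding dec map_append prod_list.append list.map prod_list.Cons prod_list.Nil
      by (simp only: mult_1_right mult_1_left ac_simps)
    hence "line_poly d c u w = [:-y, 1:] * [:-y, 1:] * R"
      using xs unfolding Phi_def R_def by (simp only: mult_smult_right)
    hence gw: "pdot (hp_grad d c (padd u (pscale y w))) w = 0"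
      by (rule grad_dot_zero_at_double_root[OF inf])
    define P where "P = padd u (pscale y w)"
    have FP: "hp_eval d c P = 0" using roots dec unfolding P_def by simp
    have "pdot (hp_grad d c P) P = 0" by (rule euler_grad_dot_self[OF inf FP])
    hence gu: "pdot (hp_grad d c P) u = 0" using gw unfolding P_def by (simp add: pdot_padd pdot_pscale)
    have aP: "pdot a P = 0" unfolding P_def using line_frame_on_line[OF b, of 1 y] by simp
    have Pnz: "P \<noteq> (0, 0, 0)" unfolding P_def by (rule line_frame_point_nonzero[OF b])
    show False using grad_not_normal_at_intersection[OF ns tr b Pnz FP aP gu gw[folded P_def]] .
  qed
  have "\<forall>s t. hp_eval d c (padd (pscale s u) (pscale t w)) = hp_eval d c w * (\<Prod>x\<leftarrow>xs. t - x * s)"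
    using hp_eval_plane_prod[OF xs[unfolded Phi_def] len] by blast
  thus ?thesis using b w(2) len dist roots by blast
qed

lemma mult_d_point_if_line_poly_const:
  fixes P Q :: "'a::field pt"
  assumes inf: "infinite (UNIV :: 'a set)" and d: "d \<ge> 2" and P: "P \<noteq> (0, 0, 0)" "hp_eval d c P = 0"
    and const: "line_poly d c Q P = [:l:]" and l: "l \<noteq> 0"
  shows "mult_d_point d c P"
proof -
  have on_line: "hp_eval d c (padd Q (pscale y P)) = l" for y
    using const poly_line_poly[of d c Q P y] by simp
  hence FQ: "hp_eval d c Q = l" using on_line[of 0] by simp
  have restr: "hp_eval d c (padd (pscale x P) (pscale y Q)) = y ^ d * hp_eval d c Q" for x y
  proof (cases "y = 0")
    case True thus ?thesis using P d by (simp add: hp_eval_scale power_0_left)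
  next
    case False
    have "padd (pscale x P) (pscale y Q) = pscale y (padd Q (pscale (x / y) P))"
      using False by (cases P; cases Q) (simp add: field_simps)
    thus ?thesis using on_line FQ by (simp add: hp_eval_scale)
  qed
  have "line_poly d c P Q = monom l d"
  proof (rule poly_eqI_infinite[OF inf])
    fix t
    have "padd P (pscale t Q) = padd (pscale 1 P) (pscale t Q)" by simp
    thus "poly (line_poly d c P Q) t = poly (monom l d) t"
      using restr[of 1 t] FQ by (simp add: poly_line_poly poly_monom mult.commute)
  qed
  hence "coeff (line_poly d c P Q) 1 = 0" using d by (simp add: coeff_monom)
  hence "pdot (hp_grad d c P) Q = 0" by (simp only: coeff_line_poly_1)
  thus ?thesis unfolding mult_d_point_def using P FQ l restr by blast
qed

section \<open>Growth of the Gauss norm\<close>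

context nonarch_field
begin

lemma entire_hp_eval: assumes "entire v x0" "entire v x1" "entire v x2"
  shows "entire v (\<lambda>z. hp_eval d c (x0 z, x1 z, x2 z))"
  unfolding hp_eval_def prod.case using assms by (intro entire_sum entire_mult entire_power entire_const)

lemma entire_pdot: assumes "entire v x0" "entire v x1" "entire v x2"
  shows "entire v (\<lambda>z. pdot g (x0 z, x1 z, x2 z))"
proof (cases g)
  case (fields g0 g1 g2)
  show ?thesis unfolding fields pdot_triple using assms by (intro entire_add entire_mult entire_const)
qed

lemma gauss_norm_power_le:
  assumes "entire v f" "r > 0" "gauss_norm r f \<le> K"
  shows "gauss_norm r (\<lambda>z. f z ^ n) \<le> K ^ n"
  using assms gauss_norm_power[OF assms(1,2)] gauss_norm_nonneg[OF assms(1,2)] by (metis power_mono)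

text \<open>Differences of products are estimated after multiplication by K, which avoids the truncated
  exponent n - 1 in the natural bound \<open>\<delta> K\<^sup>n\<^sup>-\<^sup>1\<close> for monomials of degree n.\<close>

lemma gauss_norm_mult_diff_le:
  assumes e: "entire v x1" "entire v x2" "entire v y1" "entire v y2" and r: "r > 0" and K: "0 \<le> K"
    and diff1: "gauss_norm r (\<lambda>z. x1 z - y1 z) * K \<le> \<delta> * K ^ m"
    and diff2: "gauss_norm r (\<lambda>z. x2 z - y2 z) * K \<le> \<delta> * K ^ n"
    and y1: "gauss_norm r y1 \<le> K ^ m" and x2: "gauss_norm r x2 \<le> K ^ n"
  shows "gauss_norm r (\<lambda>z. x1 z * x2 z - y1 z * y2 z) * K \<le> \<delta> * K ^ (m + n)"
proof -
  have eq: "(\<lambda>z. x1 z * x2 z - y1 z * y2 z) = (\<lambda>z. (x1 z - y1 z) * x2 z + y1 z * (x2 z - y2 z))"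
    by (simp add: algebra_simps)
  have "gauss_norm r (\<lambda>z. (x1 z - y1 z) * x2 z) * K = (gauss_norm r (\<lambda>z. x1 z - y1 z) * K) * gauss_norm r x2"
    using e r by (simp add: gauss_norm_mult entire_diff)
  also have "\<dots> \<le> (\<delta> * K ^ m) * K ^ n"
  proof (rule mult_mono[OF diff1 x2])
    show "0 \<le> \<delta> * K ^ m"
      using diff1 gauss_norm_nonneg[OF entire_diff[OF e(1,3)] r] K by (meson mult_nonneg_nonneg order_trans)
  qed (use e r in \<open>auto intro: gauss_norm_nonneg\<close>)
  finally have 1: "gauss_norm r (\<lambda>z. (x1 z - y1 z) * x2 z) * K \<le> \<delta> * K ^ (m + n)"
    by (simp add: power_add mult.assoc)
  have "gauss_norm r (\<lambda>z. y1 z * (x2 z - y2 z)) * K = gauss_norm r y1 * (gauss_norm r (\<lambda>z. x2 z - y2 z) * K)"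
    using e r by (simp add: gauss_norm_mult entire_diff)
  also have "\<dots> \<le> K ^ m * (\<delta> * K ^ n)"
    by (rule mult_mono[OF y1 diff2]) (use e r K in \<open>auto intro!: mult_nonneg_nonneg gauss_norm_nonneg entire_diff\<close>)
  finally have 2: "gauss_norm r (\<lambda>z. y1 z * (x2 z - y2 z)) * K \<le> \<delta> * K ^ (m + n)"
    by (simp add: power_add ac_simps)
  have "gauss_norm r (\<lambda>z. (x1 z - y1 z) * x2 z + y1 z * (x2 z - y2 z))
      \<le> max (gauss_norm r (\<lambda>z. (x1 z - y1 z) * x2 z)) (gauss_norm r (\<lambda>z. y1 z * (x2 z - y2 z)))"
    using e r by (intro gauss_norm_add entire_mult entire_diff)
  hence "gauss_norm r (\<lambda>z. (x1 z - y1 z) * x2 z + y1 z * (x2 z - y2 z)) * K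
      \<le> max (gauss_norm r (\<lambda>z. (x1 z - y1 z) * x2 z)) (gauss_norm r (\<lambda>z. y1 z * (x2 z - y2 z))) * K"
    using K by (rule mult_right_mono)
  thus ?thesis unfolding eq using 1 2 K by (simp add: max_mult_distrib_right)
qed

lemma gauss_norm_power_diff_le:
  assumes ex: "entire v x" and ey: "entire v y" and r: "r > 0" and K: "0 \<le> K" "0 \<le> \<delta>"
    and diff: "gauss_norm r (\<lambda>z. x z - y z) \<le> \<delta>" and "gauss_norm r x \<le> K" "gauss_norm r y \<le> K"
  shows "gauss_norm r (\<lambda>z. x z ^ n - y z ^ n) * K \<le> \<delta> * K ^ n"
proof (induction n)
  case 0
  thus ?case using gauss_norm_const[OF r, of 0] K by simp
next
  case (Suc n)
  have "gauss_norm r (\<lambda>z. x z - y z) * K \<le> \<delta> * K ^ 1" using diff K by (simp add: mult_right_mono)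
  from gauss_norm_mult_diff_le[OF ex entire_power[OF ex] ey entire_power[OF ey] r K(1) this Suc]
  show ?case using assms gauss_norm_power_le[OF ex r] by simp
qed

lemma gauss_norm_monomial3_diff_le:
  assumes e: "entire v x0" "entire v x1" "entire v x2" "entire v y0" "entire v y1" "entire v y2"
    and r: "r > 0" and K: "0 \<le> K" "0 \<le> \<delta>"
    and diff: "gauss_norm r (\<lambda>z. x0 z - y0 z) \<le> \<delta>" "gauss_norm r (\<lambda>z. x1 z - y1 z) \<le> \<delta>"
      "gauss_norm r (\<lambda>z. x2 z - y2 z) \<le> \<delta>"
    and bound: "gauss_norm r x0 \<le> K" "gauss_norm r x1 \<le> K" "gauss_norm r x2 \<le> K"
      "gauss_norm r y0 \<le> K" "gauss_norm r y1 \<le> K" "gauss_norm r y2 \<le> K"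
  shows "gauss_norm r (\<lambda>z. x0 z ^ i * x1 z ^ j * x2 z ^ k - y0 z ^ i * y1 z ^ j * y2 z ^ k) * K
    \<le> \<delta> * K ^ (i + j + k)"
proof (rule gauss_norm_mult_diff_le[OF _ entire_power _ entire_power r K(1)])
  show "gauss_norm r (\<lambda>z. x0 z ^ i * x1 z ^ j - y0 z ^ i * y1 z ^ j) * K \<le> \<delta> * K ^ (i + j)"
    by (rule gauss_norm_mult_diff_le[OF entire_power entire_power entire_power entire_power r K(1)
        gauss_norm_power_diff_le gauss_norm_power_diff_le gauss_norm_power_le gauss_norm_power_le])
      (use e r K diff bound in auto)
  have "gauss_norm r (\<lambda>z. y0 z ^ i * y1 z ^ j) = gauss_norm r (\<lambda>z. y0 z ^ i) * gauss_norm r (\<lambda>z. y1 z ^ j)"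
    using e r by (intro gauss_norm_mult entire_power)
  also have "\<dots> \<le> K ^ i * K ^ j"
    using e r K bound by (intro mult_mono gauss_norm_power_le gauss_norm_nonneg entire_power) auto
  finally show "gauss_norm r (\<lambda>z. y0 z ^ i * y1 z ^ j) \<le> K ^ (i + j)" by (simp add: power_add)
qed (use e r K diff bound in \<open>auto intro: gauss_norm_power_diff_le gauss_norm_power_le\<close>)

definition coeff_bound :: "nat \<Rightarrow> (nat \<Rightarrow> nat \<Rightarrow> 'a) \<Rightarrow> real" where
  "coeff_bound d c = (\<Sum>i\<le>d. \<Sum>j\<le>d-i. v (c i j))"

lemma coeff_bound_nonneg: "0 \<le> coeff_bound d c"
  unfolding coeff_bound_def by (intro sum_nonneg) auto

lemma gauss_norm_hp_eval_diff_le: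
  assumes e: "entire v x0" "entire v x1" "entire v x2" "entire v y0" "entire v y1" "entire v y2"
    and r: "r > 0" and K: "0 < K" "0 \<le> \<delta>"
    and diff: "gauss_norm r (\<lambda>z. x0 z - y0 z) \<le> \<delta>" "gauss_norm r (\<lambda>z. x1 z - y1 z) \<le> \<delta>"
      "gauss_norm r (\<lambda>z. x2 z - y2 z) \<le> \<delta>"
    and bound: "gauss_norm r x0 \<le> K" "gauss_norm r x1 \<le> K" "gauss_norm r x2 \<le> K"
      "gauss_norm r y0 \<le> K" "gauss_norm r y1 \<le> K" "gauss_norm r y2 \<le> K"
  shows "gauss_norm r (\<lambda>z. hp_eval d c (x0 z, x1 z, x2 z) - hp_eval d c (y0 z, y1 z, y2 z)) * K
     \<le> coeff_bound d c * \<delta> * K ^ d"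
proof -
  define B where "B = coeff_bound d c * \<delta> * K ^ d / K"
  have B0: "0 \<le> B" unfolding B_def using K coeff_bound_nonneg by simp
  define mono_diff where "mono_diff i j z = c i j * (x0 z ^ i * x1 z ^ j * x2 z ^ (d-i-j) - y0 z ^ i * y1 z ^ j * y2 z ^ (d-i-j))"
    for i j z
  have eterm: "entire v (mono_diff i j)" for i j unfolding mono_diff_def by (intro entire_mult entire_diff entire_power entire_const e)
  have "gauss_norm r (mono_diff i j) \<le> B" if ij: "i \<le> d" "j \<le> d - i" for i j
  proof -
    have "v (c i j) \<le> (\<Sum>j\<le>d-i. v (c i j))" using ij by (intro member_le_sum) auto
    also have "\<dots> \<le> coeff_bound d c" unfolding coeff_bound_def using ij by (intro member_le_sum sum_nonneg) auto
    finally have ci: "v (c i j) \<le> coeff_bound d c" .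
    have "gauss_norm r (mono_diff i j) * K
        = v (c i j) * (gauss_norm r (\<lambda>z. x0 z ^ i * x1 z ^ j * x2 z ^ (d-i-j) - y0 z ^ i * y1 z ^ j * y2 z ^ (d-i-j)) * K)"
      unfolding mono_diff_def using e r by (simp add: gauss_norm_cmult entire_mult entire_diff entire_power)
    also have "\<dots> \<le> coeff_bound d c * (\<delta> * K ^ (i + j + (d - i - j)))"
      by (rule mult_mono[OF ci gauss_norm_monomial3_diff_le[OF e r less_imp_le[OF K(1)] K(2) diff bound]])
        (use coeff_bound_nonneg e r K in \<open>auto intro!: mult_nonneg_nonneg gauss_norm_nonneg entire_diff entire_mult entire_power\<close>)
    also have "i + j + (d - i - j) = d" using ij by simp
    finally show ?thesis unfolding B_def using K by (simp add: field_simps)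
  qed
  hence "gauss_norm r (\<lambda>z. \<Sum>i\<le>d. \<Sum>j\<le>d-i. mono_diff i j z) \<le> B"
    using eterm r B0 by (intro gauss_norm_sum_le entire_sum) auto
  moreover have "(\<lambda>z. hp_eval d c (x0 z, x1 z, x2 z) - hp_eval d c (y0 z, y1 z, y2 z))
      = (\<lambda>z. \<Sum>i\<le>d. \<Sum>j\<le>d-i. mono_diff i j z)"
    unfolding hp_eval_def mono_diff_def prod.case by (simp add: sum_subtractf right_diff_distrib mult.assoc)
  ultimately show ?thesis unfolding B_def using K by (simp add: field_simps)
qed

definition pair_norm :: "real \<Rightarrow> ('a \<Rightarrow> 'a) \<Rightarrow> ('a \<Rightarrow> 'a) \<Rightarrow> real" where
  "pair_norm r f g = max 1 (max (gauss_norm r f) (gauss_norm r g))"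

lemma gauss_norm_from_two_factors:
  fixes sg tau :: "'a \<Rightarrow> 'a"
  assumes es: "entire v sg" and et: "entire v tau" and r: "r > 0"
    and Lx: "gauss_norm r (\<lambda>z. tau z - x * sg z) \<le> L" and Ly: "gauss_norm r (\<lambda>z. tau z - y * sg z) \<le> L"
    and D: "1 + v x \<le> D * v (y - x)" "1 \<le> D" and L1: "1 \<le> L"
  shows "pair_norm r sg tau \<le> D * L"
proof -
  have eLx: "entire v (\<lambda>z. tau z - x * sg z)" by (intro entire_diff entire_mult entire_const es et)
  have eLy: "entire v (\<lambda>z. tau z - y * sg z)" by (intro entire_diff entire_mult entire_const es et)
  have "(\<lambda>z. (y - x) * sg z) = (\<lambda>z. (tau z - x * sg z) - (tau z - y * sg z))"
    by (rule ext) (simp add: algebra_simps)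
  hence "v (y - x) * gauss_norm r sg \<le> L"
    using gauss_norm_cmult[OF es r, of "y - x"] gauss_norm_diff_le[OF eLx eLy r Lx Ly] by simp
  hence "D * (v (y - x) * gauss_norm r sg) \<le> D * L" using D by (intro mult_left_mono) auto
  moreover have "(1 + v x) * gauss_norm r sg \<le> D * v (y - x) * gauss_norm r sg"
    using D gauss_norm_nonneg[OF es r] by (intro mult_right_mono) auto
  ultimately have sg: "(1 + v x) * gauss_norm r sg \<le> D * L" by (simp add: mult.assoc)
  have N0: "0 \<le> gauss_norm r sg" by (rule gauss_norm_nonneg[OF es r])
  have "0 \<le> v x * gauss_norm r sg" using N0 by simp
  hence Nsg: "gauss_norm r sg \<le> D * L" and Nxsg: "gauss_norm r (\<lambda>z. x * sg z) \<le> D * L"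
    using sg N0 unfolding gauss_norm_cmult[OF es r, of x] distrib_right by linarith+
  have LD: "L \<le> D * L" using D(2) L1 by simp
  have "gauss_norm r tau \<le> max (gauss_norm r (\<lambda>z. tau z - x * sg z)) (gauss_norm r (\<lambda>z. x * sg z))"
    using gauss_norm_add[OF eLx entire_cmult[OF es] r, of x] by simp
  also have "\<dots> \<le> D * L" using Lx LD Nxsg by simp
  finally have "gauss_norm r tau \<le> D * L" .
  moreover have "1 \<le> D * L" using LD L1 by linarith
  ultimately show ?thesis using Nsg unfolding pair_norm_def by simp
qed

lemma gauss_norm_lin_comb_le:
  fixes s t :: "'a \<Rightarrow> 'a"
  assumes es: "entire v s" and et: "entire v t" and r: "r > 0" and "gauss_norm r s \<le> M" "gauss_norm r t \<le> M" "0 \<le> M"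
    and "v al \<le> C" "v be \<le> C"
  shows "gauss_norm r (\<lambda>z. s z * al + t z * be) \<le> C * M"
proof -
  have "gauss_norm r (\<lambda>z. s z * al) = gauss_norm r s * v al" using gauss_norm_mult[OF es entire_const r, of al] gauss_norm_const[OF r] by simp
  also have "\<dots> \<le> M * C" using assms gauss_norm_nonneg[OF es r] by (intro mult_mono) auto
  finally have 1: "gauss_norm r (\<lambda>z. s z * al) \<le> C * M" by (simp add: mult.commute)
  have "gauss_norm r (\<lambda>z. t z * be) = gauss_norm r t * v be" using gauss_norm_mult[OF et entire_const r, of be] gauss_norm_const[OF r] by simp
  also have "\<dots> \<le> M * C" using assms gauss_norm_nonneg[OF et r] by (intro mult_mono) auto
  finally have 2: "gauss_norm r (\<lambda>z. t z * be) \<le> C * M" by (simp add: mult.commute)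
  show ?thesis by (rule gauss_norm_add_le[OF _ _ r 1 2]) (intro entire_mult entire_const es et)+
qed

lemma gauss_norm_add_const_le:
  fixes s :: "'a \<Rightarrow> 'a"
  assumes es: "entire v s" and r: "r > 0" and "gauss_norm r s \<le> B" "v g \<le> B"
  shows "gauss_norm r (\<lambda>z. s z + g) \<le> B"
  using gauss_norm_add_le[OF es entire_const r, of B g] assms gauss_norm_const[OF r] by simp

lemma gauss_norm_unbounded_finite:
  assumes "finite X" "\<And>x. x \<in> X \<Longrightarrow> entire v (f x)" "\<And>x. x \<in> X \<Longrightarrow> \<not> (\<exists>m. \<forall>z. f x z = m)"
  shows "\<exists>r>0. \<forall>x\<in>X. gauss_norm r (f x) > B"
proof -
  have "\<forall>x\<in>X. \<exists>R>0. \<forall>r\<ge>R. gauss_norm r (f x) > B"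
    using assms(2,3) gauss_norm_unbounded by blast
  then obtain R where R: "\<forall>x\<in>X. R x > 0 \<and> (\<forall>r\<ge>R x. gauss_norm r (f x) > B)" by metis
  define r where "r = 1 + (\<Sum>x\<in>X. R x)"
  have sum0: "0 \<le> (\<Sum>x\<in>X. R x)" using R by (intro sum_nonneg) (auto intro: less_imp_le)
  have "R x \<le> r" if "x \<in> X" for x
  proof -
    have "R x \<le> (\<Sum>x\<in>X. R x)" using that assms(1) R by (intro member_le_sum) (auto intro: less_imp_le)
    thus ?thesis unfolding r_def by linarith
  qed
  moreover have "r > 0" unfolding r_def using sum0 by linarith
  ultimately show ?thesis using R by blast
qed

lemma exists_slope_bound:
  assumes "finite X"
  obtains D where "1 \<le> D" "\<And>x y. x \<in> X \<Longrightarrow> y \<in> X \<Longrightarrow> y \<noteq> x \<Longrightarrow> 1 + v x \<le> D * v (y - x)"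
proof -
  define S where "S = (\<Sum>x\<in>X. \<Sum>y\<in>X. if y = x then 0 else (1 + v x) / v (y - x))"
  have "1 + v x \<le> (1 + S) * v (y - x)" if "x \<in> X" "y \<in> X" "y \<noteq> x" for x y
  proof -
    have "(1 + v x) / v (y - x) \<le> (\<Sum>y\<in>X. if y = x then 0 else (1 + v x) / v (y - x))"
      using member_le_sum[of y X "\<lambda>y. if y = x then 0 else (1 + v x) / v (y - x)"] that assms by simp
    also have "\<dots> \<le> S" unfolding S_def using that assms by (intro member_le_sum sum_nonneg) auto
    also have "\<dots> \<le> 1 + S" by simp
    finally show ?thesis using that(3) by (simp add: divide_le_eq)
  qed
  moreover have "0 \<le> S" unfolding S_def by (intro sum_nonneg) auto
  ultimately show ?thesis using that[of "1 + S"] by simp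
qed

lemma linear_factor_const_if_product_small:
  fixes sg tau :: "'a \<Rightarrow> 'a"
  assumes es: "entire v sg" and et: "entire v tau" and X: "finite X" "X \<noteq> {}"
    and small: "\<And>r. r > 0 \<Longrightarrow> (\<Prod>x\<in>X. gauss_norm r (\<lambda>z. tau z - x * sg z))
      * pair_norm r sg tau \<le> C * pair_norm r sg tau ^ card X"
  shows "\<exists>x\<in>X. \<exists>m. \<forall>z. tau z - x * sg z = m"
proof (rule ccontr)
  assume nc: "\<not> ?thesis"
  define Lam where "Lam x z = tau z - x * sg z" for x z
  have eLam: "entire v (Lam x)" for x unfolding Lam_def by (intro entire_diff entire_mult entire_const es et)
  define n where "n = card X - 1"
  obtain D where D1: "1 \<le> D" and Dxy: "\<And>x y. x \<in> X \<Longrightarrow> y \<in> X \<Longrightarrow> y \<noteq> x \<Longrightarrow> 1 + v x \<le> D * v (y - x)"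
    using exists_slope_bound[OF X(1)] by blast
  define B0 where "B0 = max 1 (C * D ^ n)"
  have "\<not> (\<exists>m. \<forall>z. Lam x z = m)" if "x \<in> X" for x using nc that unfolding Lam_def by blast
  then obtain r where r: "r > 0" and large: "\<forall>x\<in>X. gauss_norm r (Lam x) > B0"
    using gauss_norm_unbounded_finite[OF X(1), of Lam B0] eLam by blast
  define M where "M = pair_norm r sg tau"
  have M1: "1 \<le> M" unfolding M_def pair_norm_def by simp
  obtain i0 where i0: "i0 \<in> X" "\<forall>y\<in>X. gauss_norm r (Lam i0) \<le> gauss_norm r (Lam y)"
  proof -
    have fin: "finite ((\<lambda>x. gauss_norm r (Lam x)) ` X)" "(\<lambda>x. gauss_norm r (Lam x)) ` X \<noteq> {}"
      using X by auto
    obtain i where "i \<in> X" "gauss_norm r (Lam i) = Min ((\<lambda>x. gauss_norm r (Lam x)) ` X)"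
      using Min_in[OF fin] by auto
    thus ?thesis using that Min_le[OF fin(1)] by auto
  qed
  have others: "M / D \<le> gauss_norm r (Lam y)" if "y \<in> X - {i0}" for y
  proof -
    have y: "y \<in> X" "y \<noteq> i0" using that by auto
    have L1: "1 \<le> gauss_norm r (Lam y)" using large y(1) unfolding B0_def by fastforce
    have "M \<le> D * gauss_norm r (Lam y)"
      unfolding M_def
      by (rule gauss_norm_from_two_factors[OF es et r, unfolded Lam_def[symmetric]])
         (use i0 y Dxy[OF i0(1) y(1) y(2)] D1 L1 in auto)
    thus ?thesis using D1 by (simp add: divide_le_eq mult.commute)
  qed
  have "gauss_norm r (Lam i0) * (M / D) ^ n = gauss_norm r (Lam i0) * (\<Prod>y\<in>X - {i0}. M / D)"
    using i0(1) X(1) unfolding n_def by simp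
  also have "\<dots> \<le> gauss_norm r (Lam i0) * (\<Prod>y\<in>X - {i0}. gauss_norm r (Lam y))"
    using others M1 D1 gauss_norm_nonneg[OF eLam r] by (intro mult_left_mono prod_mono) auto
  also have "\<dots> = (\<Prod>x\<in>X. gauss_norm r (Lam x))" using X(1) i0(1) by (simp add: prod.remove)
  also have "\<dots> \<le> C * M ^ n"
  proof -
    have "card X = Suc n" using X unfolding n_def by (simp add: card_gt_0_iff)
    hence "(\<Prod>x\<in>X. gauss_norm r (Lam x)) * M \<le> (C * M ^ n) * M"
      using small[OF r] unfolding Lam_def M_def by (simp add: ac_simps)
    thus ?thesis using M1 by (simp add: mult_le_cancel_right_pos)
  qed
  finally have bound: "gauss_norm r (Lam i0) * (M / D) ^ n \<le> C * M ^ n" .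
  have "gauss_norm r (Lam i0) * M ^ n = gauss_norm r (Lam i0) * (M / D) ^ n * D ^ n"
    using D1 by (simp add: power_divide)
  also have "\<dots> \<le> (C * D ^ n) * M ^ n" using bound D1 by (simp add: mult_right_mono mult.commute mult.left_commute)
  finally have "gauss_norm r (Lam i0) \<le> C * D ^ n" using M1 by (simp add: mult_le_cancel_right_pos)
  thus False using large i0(1) unfolding B0_def by fastforce
qed

lemma gauss_norm_hp_eval_shift_le:
  fixes q0 q1 q2 :: "'a \<Rightarrow> 'a"
  assumes d: "1 \<le> d" and eq: "entire v q0" "entire v q1" "entire v q2" and r: "r > 0"
    and const: "\<And>z. hp_eval d c (q0 z + g0, q1 z + g1, q2 z + g2) = l"
    and G: "1 \<le> G" "v g0 \<le> G" "v g1 \<le> G" "v g2 \<le> G" and M: "1 \<le> M"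
    and Nq: "gauss_norm r q0 \<le> G * M" "gauss_norm r q1 \<le> G * M" "gauss_norm r q2 \<le> G * M"
  shows "gauss_norm r (\<lambda>z. hp_eval d c (q0 z, q1 z, q2 z)) * M \<le> (v l + coeff_bound d c * G ^ d) * M ^ d"
proof -
  have GM: "G \<le> G * M" using G M by (simp add: mult_le_cancel_left1)
  have Nf: "gauss_norm r (\<lambda>z. q0 z + g0) \<le> G * M" "gauss_norm r (\<lambda>z. q1 z + g1) \<le> G * M"
    "gauss_norm r (\<lambda>z. q2 z + g2) \<le> G * M"
    using Nq G GM by (intro gauss_norm_add_const_le[OF _ r] eq; linarith)+
  have Ndf: "gauss_norm r (\<lambda>z. (q0 z + g0) - q0 z) \<le> G" "gauss_norm r (\<lambda>z. (q1 z + g1) - q1 z) \<le> G"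
    "gauss_norm r (\<lambda>z. (q2 z + g2) - q2 z) \<le> G"
    using G gauss_norm_const[OF r] by simp_all
  define Fdiff where "Fdiff z = hp_eval d c (q0 z + g0, q1 z + g1, q2 z + g2) - hp_eval d c (q0 z, q1 z, q2 z)" for z
  have "gauss_norm r Fdiff * (G * M) \<le> coeff_bound d c * G * (G * M) ^ d"
    unfolding Fdiff_def
    by (rule gauss_norm_hp_eval_diff_le[OF _ _ _ eq r _ _ Ndf Nf Nq]) (use G M eq in auto)
  hence "G * (gauss_norm r Fdiff * M) \<le> G * (coeff_bound d c * G ^ d * M ^ d)"
    by (simp add: power_mult_distrib ac_simps)
  hence Nd: "gauss_norm r Fdiff * M \<le> coeff_bound d c * G ^ d * M ^ d"
    using G by (simp add: mult_le_cancel_left_pos)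
  have "M ^ 1 \<le> M ^ d" using M d by (intro power_increasing) auto
  hence Nl: "v l * M \<le> v l * M ^ d" by (simp add: mult_left_mono)
  have "gauss_norm r (\<lambda>z. hp_eval d c (q0 z, q1 z, q2 z)) = gauss_norm r (\<lambda>z. l - Fdiff z)"
    using const unfolding Fdiff_def by simp
  also have "\<dots> \<le> max (v l) (gauss_norm r Fdiff)"
  proof -
    have "entire v Fdiff" unfolding Fdiff_def using eq by (intro entire_diff entire_hp_eval entire_add entire_const)
    thus ?thesis using gauss_norm_diff[OF entire_const _ r, of Fdiff l] gauss_norm_const[OF r, of l] by simp
  qed
  finally have "gauss_norm r (\<lambda>z. hp_eval d c (q0 z, q1 z, q2 z)) * M \<le> max (v l) (gauss_norm r Fdiff) * M"
    using M by (intro mult_right_mono) auto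
  also have "\<dots> = max (v l * M) (gauss_norm r Fdiff * M)"
    using M by (simp add: max_mult_distrib_right)
  also have "\<dots> \<le> (v l + coeff_bound d c * G ^ d) * M ^ d"
  proof -
    have "0 \<le> v l * M ^ d" "0 \<le> coeff_bound d c * G ^ d * M ^ d" using M G coeff_bound_nonneg by auto
    thus ?thesis using Nl Nd unfolding distrib_right max.bounded_iff by (intro conjI) linarith+
  qed
  finally show ?thesis .
qed

lemma gauss_norm_hp_eval_plane_le:
  fixes sg tau :: "'a \<Rightarrow> 'a" and u w g :: "'a pt"
  assumes d: "1 \<le> d" and es: "entire v sg" and et: "entire v tau"
    and const: "\<And>z. hp_eval d c (padd (padd (pscale (sg z) u) (pscale (tau z) w)) g) = l"
  obtains C where "\<And>r. r > 0 \<Longrightarrow> gauss_norm r (\<lambda>z. hp_eval d c (padd (pscale (sg z) u) (pscale (tau z) w)))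
      * pair_norm r sg tau \<le> C * pair_norm r sg tau ^ d"
proof -
  obtain u0 u1 u2 where u: "u = (u0, u1, u2)" by (cases u)
  obtain w0 w1 w2 where w: "w = (w0, w1, w2)" by (cases w)
  obtain g0 g1 g2 where g: "g = (g0, g1, g2)" by (cases g)
  define q0 where "q0 z = sg z * u0 + tau z * w0" for z
  define q1 where "q1 z = sg z * u1 + tau z * w1" for z
  define q2 where "q2 z = sg z * u2 + tau z * w2" for z
  have eq: "entire v q0" "entire v q1" "entire v q2" unfolding q0_def q1_def q2_def
    by (intro entire_add entire_mult entire_const es et)+
  have plane: "padd (pscale (sg z) u) (pscale (tau z) w) = (q0 z, q1 z, q2 z)" for z
    unfolding q0_def q1_def q2_def u w by (simp add: algebra_simps)
  have shifted: "hp_eval d c (q0 z + g0, q1 z + g1, q2 z + g2) = l" for z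
    using const[of z] plane[of z] unfolding g by simp
  define G where "G = 1 + (v u0 + v u1 + v u2) + (v w0 + v w1 + v w2) + (v g0 + v g1 + v g2)"
  have G: "1 \<le> G" "v u0 \<le> G" "v u1 \<le> G" "v u2 \<le> G" "v w0 \<le> G" "v w1 \<le> G" "v w2 \<le> G"
    "v g0 \<le> G" "v g1 \<le> G" "v g2 \<le> G"
    unfolding G_def by (simp_all add: add_nonneg_nonneg)
  show ?thesis
  proof (rule that)
    fix r :: real assume r: "r > 0"
    define M where "M = pair_norm r sg tau"
    have M1: "1 \<le> M" and Msg: "gauss_norm r sg \<le> M" and Mtau: "gauss_norm r tau \<le> M"
      unfolding M_def pair_norm_def by auto
    have Nq: "gauss_norm r q0 \<le> G * M" "gauss_norm r q1 \<le> G * M" "gauss_norm r q2 \<le> G * M"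
      unfolding q0_def q1_def q2_def using G M1
      by (intro gauss_norm_lin_comb_le[OF es et r Msg Mtau]; simp)+
    show "gauss_norm r (\<lambda>z. hp_eval d c (padd (pscale (sg z) u) (pscale (tau z) w))) * M
        \<le> (v l + coeff_bound d c * G ^ d) * M ^ d"
      unfolding plane using gauss_norm_hp_eval_shift_le[OF d eq r shifted G(1,8,9,10) M1 Nq] .
  qed
qed

end

section \<open>Hyperbolicity of the complement\<close>

context nonarch_complete_field
begin

lemma linear_factor_const_if_form_const:
  fixes sg tau :: "'a \<Rightarrow> 'a" and u w g :: "'a pt"
  assumes d: "1 \<le> d" and es: "entire v sg" and et: "entire v tau"
    and Fw: "hp_eval d c w \<noteq> 0" and len: "length xs = d" and dist: "distinct xs"
    and split: "\<forall>s t. hp_eval d c (padd (pscale s u) (pscale t w)) = hp_eval d c w * (\<Prod>x\<leftarrow>xs. t - x * s)"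
    and const: "\<And>z. hp_eval d c (padd (padd (pscale (sg z) u) (pscale (tau z) w)) g) = l"
  shows "\<exists>x\<in>set xs. \<exists>m. \<forall>z. tau z - x * sg z = m"
proof -
  obtain C where C: "\<And>r. r > 0 \<Longrightarrow> gauss_norm r (\<lambda>z. hp_eval d c (padd (pscale (sg z) u) (pscale (tau z) w)))
      * pair_norm r sg tau \<le> C * pair_norm r sg tau ^ d"
    using gauss_norm_hp_eval_plane_le[OF d es et const] by blast
  have Fq: "(\<lambda>z. hp_eval d c (padd (pscale (sg z) u) (pscale (tau z) w)))
      = (\<lambda>z. hp_eval d c w * (\<Prod>x\<in>set xs. tau z - x * sg z))"
    using split dist by (simp add: prod.distinct_set_conv_list)
  have eLam: "entire v (\<lambda>z. tau z - x * sg z)" for x by (intro entire_diff entire_mult entire_const es et)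
  show ?thesis
  proof (rule linear_factor_const_if_product_small[OF es et, where C = "C / v (hp_eval d c w)"])
    fix r :: real assume r: "r > 0"
    have "gauss_norm r (\<lambda>z. hp_eval d c (padd (pscale (sg z) u) (pscale (tau z) w)))
        = v (hp_eval d c w) * gauss_norm r (\<lambda>z. \<Prod>x\<in>set xs. tau z - x * sg z)"
      unfolding Fq by (rule gauss_norm_cmult[OF entire_prod[OF eLam] r])
    also have "\<dots> = v (hp_eval d c w) * (\<Prod>x\<in>set xs. gauss_norm r (\<lambda>z. tau z - x * sg z))"
      using gauss_norm_prod[where f = "\<lambda>x z. tau z - x * sg z", OF eLam r] by simp
    finally show "(\<Prod>x\<in>set xs. gauss_norm r (\<lambda>z. tau z - x * sg z)) * pair_norm r sg tau
        \<le> C / v (hp_eval d c w) * pair_norm r sg tau ^ card (set xs)"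
      using C[OF r] Fw distinct_card[OF dist] len by (simp add: field_simps)
  qed (use len d in auto)
qed

lemma entire_const_on_line_through_curve_point:
  fixes P Q :: "'a pt"
  assumes d: "d \<ge> 2" and P: "P \<noteq> (0, 0, 0)" "hp_eval d c P = 0" "\<not> mult_d_point d c P"
    and s: "entire v s" and on_line: "\<And>z. hp_eval d c (padd Q (pscale (s z) P)) = l" and l: "l \<noteq> 0"
  shows "\<exists>k. \<forall>z. s z = k"
proof (rule entire_const_if_poly_const[OF s])
  show "line_poly d c Q P \<noteq> [:l:]"
    using mult_d_point_if_line_poly_const[OF alg_closed_field_infinite[OF acl] d P(1,2) _ l] P(3) by blast
  show "poly (line_poly d c Q P) (s z) = l" for z
    unfolding poly_line_poly by (rule on_line)
qed

lemma entire_map_to_complement_const: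
  fixes c :: "nat \<Rightarrow> nat \<Rightarrow> 'a" and a :: "'a pt" and f0 f1 f2 :: "'a \<Rightarrow> 'a"
  assumes d: "d \<ge> 2" and ns: "nonsingular_curve d c" and a0: "a \<noteq> (0, 0, 0)" and tr: "transversal d c a"
    and nomult: "\<forall>p. mult_d_point d c p \<longrightarrow> pdot a p \<noteq> 0"
    and e: "entire v f0" "entire v f1" "entire v f2"
    and avoid: "\<forall>z. hp_eval d c (f0 z, f1 z, f2 z) \<noteq> 0 \<and> pdot a (f0 z, f1 z, f2 z) \<noteq> 0"
  shows "(f0 z, f1 z, f2 z) = (f0 z', f1 z', f2 z')"
proof -
  have d1: "d \<ge> 1" using d by simp
  then obtain u w e S T xs where b: "line_frame a u w e S T" and Fw: "hp_eval d c w \<noteq> 0"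
    and len: "length xs = d" and dist: "distinct xs" and roots: "\<forall>x\<in>set xs. hp_eval d c (padd u (pscale x w)) = 0"
    and split: "\<forall>s t. hp_eval d c (padd (pscale s u) (pscale t w)) = hp_eval d c w * (\<Prod>x\<leftarrow>xs. t - x * s)"
    using curve_on_line_splits[OF acl _ ns a0 tr] by blast
  define fv where "fv z = (f0 z, f1 z, f2 z)" for z
  have efv: "entire v (\<lambda>z. pdot g (fv z))" for g unfolding fv_def by (rule entire_pdot[OF e])
  obtain l1 where l1: "\<forall>z. pdot a (fv z) = l1"
    using entire_zero_free_const[OF efv[of a]] avoid unfolding fv_def by blast
  obtain l2 where l2: "\<forall>z. hp_eval d c (fv z) = l2"
    using entire_zero_free_const[OF entire_hp_eval[OF e]] avoid unfolding fv_def by blast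
  define sg where "sg z = pdot S (fv z)" for z
  define tau where "tau z = pdot T (fv z)" for z
  have esg: "entire v sg" and etau: "entire v tau" unfolding sg_def tau_def by (rule efv)+
  have fv_frame: "fv z = padd (padd (pscale (sg z) u) (pscale (tau z) w)) (pscale l1 e)" for z
    using line_frame_decomp[OF b, of "fv z"] l1 unfolding sg_def tau_def by simp
  have "hp_eval d c (padd (padd (pscale (sg z) u) (pscale (tau z) w)) (pscale l1 e)) = l2" for z
    using l2 fv_frame[of z] by metis
  then obtain x0 m where x0: "x0 \<in> set xs" and m: "\<forall>z. tau z - x0 * sg z = m"
    using linear_factor_const_if_form_const[OF d1 esg etau Fw len dist split] by blast
  define P where "P = padd u (pscale x0 w)"
  define Q where "Q = padd (pscale m w) (pscale l1 e)"
  have fv_line: "fv z = padd Q (pscale (sg z) P)" for z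
  proof -
    have "tau z = m + x0 * sg z" using m by (metis diff_add_cancel add.commute)
    thus ?thesis unfolding fv_frame P_def Q_def by (cases u; cases w; cases e) (simp add: algebra_simps)
  qed
  have "pdot a P = 0" unfolding P_def using line_frame_on_line[OF b, of 1 x0] by simp
  hence "\<not> mult_d_point d c P" using nomult by blast
  moreover have "hp_eval d c P = 0" using roots x0 unfolding P_def by blast
  moreover have "l2 \<noteq> 0" using l2 avoid unfolding fv_def by metis
  ultimately obtain k where "\<forall>z. sg z = k"
    using entire_const_on_line_through_curve_point[OF d line_frame_point_nonzero[OF b] _ _ esg] l2 fv_line
    unfolding P_def by metis
  thus ?thesis using fv_line unfolding fv_def by simp
qed

end

theorem corollary2p4:
  fixes v :: "'a::field \<Rightarrow> real"
    and d :: nat and c :: "nat \<Rightarrow> nat \<Rightarrow> 'a" and a :: "'a pt"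
  assumes "alg_closed_field TYPE('a)"
    and "nonarch_abs v"
    and "v_complete v"
    and "d \<ge> 3"
    and "nonsingular_curve d c"
    and "a \<noteq> (0,0,0)"
    and "transversal d c a"
    and "\<forall>p. mult_d_point d c p \<longrightarrow> pdot a p \<noteq> 0"
  shows "brody_hyperbolic_complement v d c a"
  unfolding brody_hyperbolic_complement_def
proof (intro allI impI)
  interpret nonarch_complete_field v using assms(1-3) by unfold_locales auto
  fix f0 f1 f2 :: "'a \<Rightarrow> 'a" and z w :: 'a
  assume e: "entire v f0" "entire v f1" "entire v f2" and "\<forall>z. (f0 z, f1 z, f2 z) \<noteq> (0, 0, 0)"
    and avoid: "\<forall>z. hp_eval d c (f0 z, f1 z, f2 z) \<noteq> 0 \<and> pdot a (f0 z, f1 z, f2 z) \<noteq> 0"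
  have "d \<ge> 2" using assms(4) by simp
  \<comment> \<open>d \<ge> 2 suffices, and the map is constant itself, not only up to scaling.\<close>
  hence "(f0 z, f1 z, f2 z) = (f0 w, f1 w, f2 w)"
    using entire_map_to_complement_const[OF _ assms(5-8) e avoid] by blast
  thus "proportional (f0 z, f1 z, f2 z) (f0 w, f1 w, f2 w)"
    unfolding proportional_def by (intro exI[of _ 1]) simp
qed

end
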